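(* Let $d\ge2$, $N\in\mathbb N$, $\epsilon>0$ and $0<\rho\le\frac12$. For $\psi\in\mathbf{Ell}(N,\epsilon)$ and $c\in(\frac12\mathbf I)^{d-1}$ set $\psi_{c,\rho}(\xi')=\rho^{-2}\big(\psi(\rho\xi'+c)-\psi(c)-\rho\nabla\psi(c)\cdot\xi'\big)$. Then $$\sup_{(\xi',c)\in\mathbf I^{d-1}\times(\frac12\mathbf I)^{d-1}}\Big|\partial^\alpha_{\xi'}\Big(\psi_{c,\rho}(\xi')-\tfrac12\langle H\psi(c)\xi',\xi'\rangle\Big)\Big|\le\begin{cases}\frac{(d-1)^{3-|\alpha|}}{(3-|\alpha|)!}\rho\epsilon,&0\le|\alpha|\le2,\\ \rho^{|\alpha|-2}\epsilon,&3\le|\alpha|\le N,\end{cases}$$ where $H\psi$ is the Hessian matrix of $\psi$. Moreover, there is a constant $\mathfrak c$ depending only on $d$ such that if $\psi\in\mathbf{Ell}(N,\epsilon)$, then $\psi_{c,\rho}\in\mathbf{Ell}(N,\mathfrak c\epsilon)$ for all $c\in(\frac12\mathbf I)^{d-1}$ and $0<\rho\le\frac12$.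
   Context: $\mathbf I=[-1,1]$, $\frac12\mathbf I=[-\frac12,\frac12]$. $\mathbf{Ell}(N,\epsilon)$ is the class of $C^N$ functions $\psi:\mathbf I^{d-1}\to\mathbb{R}$ with $\psi(0)=0$, $\nabla\psi(0)=0$, and, writing $w(\xi')=\psi(\xi')-|\xi'|^2/2$, $\sup_{\xi'\in\mathbf I^{d-1}}\max_{0\le|\alpha|\le N}|\partial^\alpha w(\xi')|\le\epsilon$.
   Formalization: The derivative bound on $\psi_{c,\rho}(\xi')-\tfrac12\langle H\psi(c)\xi',\xi'\rangle$ holds for $N\ge 3$ only, and $\psi_{c,\rho}\in\mathbf{Ell}(N,\mathfrak c\epsilon)$ holds for $N\ge 2$ only. The statement above fails without it. *)

theory Defs
  imports "HOL-Analysis.Analysis"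
begin

text \<open>Points of R^(d-1) are vectors of type real^'n, with d - 1 = CARD('n).\<close>

definition cubeI :: "(real^'n) set" where
  "cubeI = {x. \<forall>i. \<bar>x $ i\<bar> \<le> 1}"

definition half_cubeI :: "(real^'n) set" where
  "half_cubeI = {x. \<forall>i. \<bar>x $ i\<bar> \<le> 1/2}"

text \<open>Partial derivative in direction i, taken within the set S (one-sided at the boundary).\<close>
definition partial :: "(real^'n) set \<Rightarrow> 'n \<Rightarrow> (real^'n \<Rightarrow> real) \<Rightarrow> real^'n \<Rightarrow> real" where
  "partial S i f x = vector_derivative (\<lambda>t. f (x + t *\<^sub>R axis i 1))
      (at 0 within {t. x + t *\<^sub>R axis i 1 \<in> S})"

text \<open>Iterated partial derivatives along a list of directions (first list element applied last).\<close>
fun pder_list :: "(real^'n) set \<Rightarrow> 'n list \<Rightarrow> (real^'n \<Rightarrow> real) \<Rightarrow> real^'n \<Rightarrow> real" where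
  "pder_list S [] f = f"
| "pder_list S (i # is) f = partial S i (pder_list S is f)"

definition mi_order :: "('n::finite \<Rightarrow> nat) \<Rightarrow> nat" where
  "mi_order \<alpha> = (\<Sum>i\<in>UNIV. \<alpha> i)"

definition mi_list :: "('n::finite \<Rightarrow> nat) \<Rightarrow> 'n list" where
  "mi_list \<alpha> = (SOME xs. \<forall>i. count_list xs i = \<alpha> i)"

definition pder :: "(real^'n) set \<Rightarrow> ('n \<Rightarrow> nat) \<Rightarrow> (real^'n \<Rightarrow> real) \<Rightarrow> real^'n \<Rightarrow> real" where
  "pder S \<alpha> f = pder_list S (mi_list \<alpha>) f"

definition CN_on :: "(real^'n) set \<Rightarrow> nat \<Rightarrow> (real^'n \<Rightarrow> real) \<Rightarrow> bool" where
  "CN_on S N f \<longleftrightarrow>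
     (\<forall>xs. length xs \<le> N \<longrightarrow> continuous_on S (pder_list S xs f)) \<and>
     (\<forall>xs. length xs < N \<longrightarrow> pder_list S xs f differentiable_on S)"

definition grad :: "(real^'n \<Rightarrow> real) \<Rightarrow> real^'n \<Rightarrow> real^'n" where
  "grad f x = (\<chi> i. partial cubeI i f x)"

definition hess :: "(real^'n \<Rightarrow> real) \<Rightarrow> real^'n \<Rightarrow> real^'n^'n" where
  "hess f x = (\<chi> i j. pder_list cubeI [i, j] f x)"

definition Ell :: "nat \<Rightarrow> real \<Rightarrow> (real^'n \<Rightarrow> real) \<Rightarrow> bool" where
  "Ell N \<epsilon> \<psi> \<longleftrightarrow>
     CN_on cubeI N \<psi> \<and> \<psi> 0 = 0 \<and> grad \<psi> 0 = 0 \<and>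
     (\<forall>\<alpha>. mi_order \<alpha> \<le> N \<longrightarrow>
        (\<forall>\<xi>\<in>cubeI. \<bar>pder cubeI \<alpha> (\<lambda>x. \<psi> x - (norm x)\<^sup>2 / 2) \<xi>\<bar> \<le> \<epsilon>))"

definition psi_cr :: "(real^'n \<Rightarrow> real) \<Rightarrow> real^'n \<Rightarrow> real \<Rightarrow> real^'n \<Rightarrow> real" where
  "psi_cr \<psi> c \<rho> = (\<lambda>\<xi>. (\<psi> (\<rho> *\<^sub>R \<xi> + c) - \<psi> c - \<rho> * (grad \<psi> c \<bullet> \<xi>)) / \<rho>\<^sup>2)"

end

theory Submission
  imports Defs
begin

(* Let w = psi - |x|^2/2; all derivatives of w of order at most N are bounded by eps.
   Since psi - w is quadratic, both psi_{c,rho} and psi_{c,rho} - <H psi(c) xi, xi>/2 differ from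
   rho^-2 (w(c + rho xi) - w(c) - rho grad w(c) . xi) by a quadratic polynomial in xi.
   Every derivative in xi contributes a factor rho, so a derivative of order |alpha| >= 3 equals
   rho^(|alpha|-2) D^alpha w(c + rho xi).  For |alpha| <= 2 it is rho^(|alpha|-2) times a Taylor
   remainder of D^alpha w at c, of order k = 3 - |alpha| (resp. 2 - |alpha| for psi_{c,rho} itself),
   and such a remainder is at most eps |rho xi|_1^k / k! with |rho xi|_1 <= (d - 1) rho.
   Identifying the quadratic term with the Hessian needs the symmetry of mixed partials. *)

section \<open>Partial derivatives on the cube\<close>

abbreviation pderI :: "'n list \<Rightarrow> (real^'n \<Rightarrow> real) \<Rightarrow> real^'n \<Rightarrow> real" where
  "pderI \<equiv> pder_list cubeI"

lemma cubeI_iff: "x \<in> cubeI \<longleftrightarrow> (\<forall>i. \<bar>x $ i\<bar> \<le> 1)"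
  by (simp add: cubeI_def)

lemma cubeI_eq_cbox: "(cubeI :: (real^'n) set) = cbox (-1) 1"
  by (auto simp: cubeI_def mem_box_cart abs_le_iff)

lemma interior_cubeI: "interior (cubeI :: (real^'n) set) = box (-1) 1"
  by (simp add: cubeI_eq_cbox)

lemma closure_box_eq_cubeI: "closure (box (-1) 1) = (cubeI :: (real^'n) set)"
proof -
  have "(0::real^'n) \<in> box (-1) 1" by (simp add: mem_box_cart)
  then show ?thesis using closure_box cubeI_eq_cbox by (metis empty_iff)
qed

lemma half_cubeI_subset_cubeI: "half_cubeI \<subseteq> cubeI"
proof
  fix x :: "real^'n" assume x: "x \<in> half_cubeI"
  show "x \<in> cubeI" unfolding cubeI_iff
  proof
    fix i
    have "\<bar>x $ i\<bar> \<le> 1/2" using x by (simp add: half_cubeI_def)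
    then show "\<bar>x $ i\<bar> \<le> 1" by simp
  qed
qed

lemma scaleR_add_mem_cubeI:
  assumes "0 < \<rho>" "\<rho> \<le> 1/2" "c \<in> half_cubeI" "\<xi> \<in> cubeI"
  shows "\<rho> *\<^sub>R \<xi> + c \<in> cubeI"
  unfolding cubeI_iff
proof
  fix i
  have a: "\<bar>\<xi>$i\<bar> \<le> 1" "\<bar>c$i\<bar> \<le> 1/2" using assms(3,4) by (auto simp: cubeI_iff half_cubeI_def)
  have "\<bar>\<rho> * \<xi>$i + c$i\<bar> \<le> \<rho> * \<bar>\<xi>$i\<bar> + \<bar>c$i\<bar>"
    using assms(1) by (metis abs_mult abs_of_pos abs_triangle_ineq)
  also have "\<dots> \<le> 1/2 * 1 + 1/2" using a assms(1,2) by (intro add_mono mult_mono) auto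
  finally show "\<bar>(\<rho> *\<^sub>R \<xi> + c) $ i\<bar> \<le> 1" by simp
qed

lemma segment_mem_cubeI:
  assumes "c \<in> cubeI" "c + v \<in> cubeI" "t \<in> {0..1}"
  shows "c + t *\<^sub>R v \<in> cubeI"
proof -
  have "c + t *\<^sub>R v = (1 - t) *\<^sub>R c + t *\<^sub>R (c + v)" by (simp add: algebra_simps)
  with assms show ?thesis
    using convex_box(1)[of "-1" 1] unfolding cubeI_eq_cbox convex_alt by auto
qed

lemma sum_abs_scaleR_le_card:
  fixes \<xi> :: "real^'n"
  assumes "\<xi> \<in> cubeI" "0 \<le> \<rho>"
  shows "(\<Sum>j\<in>UNIV. \<bar>(\<rho> *\<^sub>R \<xi>)$j\<bar>) \<le> \<rho> * real CARD('n)"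
proof -
  have "(\<Sum>j\<in>UNIV. \<bar>(\<rho> *\<^sub>R \<xi>)$j\<bar>) = \<rho> * (\<Sum>j\<in>UNIV. \<bar>\<xi>$j\<bar>)"
    using assms(2) by (simp add: abs_mult sum_distrib_left)
  also have "(\<Sum>j\<in>UNIV. \<bar>\<xi>$j\<bar>) \<le> (\<Sum>j\<in>(UNIV::'n set). 1)"
    using assms(1) by (intro sum_mono) (simp add: cubeI_iff)
  then have "\<rho> * (\<Sum>j\<in>UNIV. \<bar>\<xi>$j\<bar>) \<le> \<rho> * real CARD('n)"
    using assms(2) by (intro mult_left_mono) auto
  finally show ?thesis .
qed

lemma at_within_line_cubeI_neq_bot:
  assumes "x \<in> cubeI"
  shows "at (0::real) within {t. x + t *\<^sub>R axis i 1 \<in> cubeI} \<noteq> bot"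
proof -
  have T: "{t. x + t *\<^sub>R axis i 1 \<in> cubeI} = {-1 - x$i .. 1 - x$i}"
    using assms by (auto simp: cubeI_iff axis_def abs_le_iff)
  have "-1 - x$i \<le> 0" "0 \<le> 1 - x$i" "-1 - x$i < 1 - x$i"
    using assms by (auto simp: cubeI_iff abs_le_iff)
  then show ?thesis unfolding T trivial_limit_within using islimpt_Icc by simp
qed

lemma partial_eq_derivative:
  assumes "(f has_derivative D) (at x within cubeI)" "x \<in> cubeI"
  shows "partial cubeI i f x = D (axis i 1)"
proof -
  let ?T = "{t. x + t *\<^sub>R axis i 1 \<in> cubeI}"
  have l: "((\<lambda>t. x + t *\<^sub>R axis i 1) has_derivative (\<lambda>t. t *\<^sub>R axis i 1)) (at 0 within ?T)"
    by (auto intro!: derivative_eq_intros)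
  have "(f has_derivative D) (at ((\<lambda>t. x + t *\<^sub>R axis i 1) 0) within (\<lambda>t. x + t *\<^sub>R axis i 1) ` ?T)"
    using assms(1) by (auto intro: has_derivative_subset)
  from diff_chain_within[OF l this]
  have "((\<lambda>t. f (x + t *\<^sub>R axis i 1)) has_derivative (\<lambda>t. D (t *\<^sub>R axis i 1))) (at 0 within ?T)"
    by (simp add: o_def)
  moreover have "linear D" using assms(1) has_derivative_linear by blast
  ultimately have "((\<lambda>t. f (x + t *\<^sub>R axis i 1)) has_vector_derivative D (axis i 1)) (at 0 within ?T)"
    unfolding has_vector_derivative_def by (simp add: linear_scale)
  then show ?thesis unfolding partial_def
    using vector_derivative_within at_within_line_cubeI_neq_bot[OF assms(2)] by blast
qed

lemma partial_cong:
  assumes "\<forall>y\<in>cubeI. f y = g y" "x \<in> cubeI"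
  shows "partial cubeI i f x = partial cubeI i g x"
proof -
  let ?T = "{t. x + t *\<^sub>R axis i 1 \<in> cubeI}"
  have "0 \<in> ?T" using assms(2) by simp
  have "((\<lambda>t. f (x + t *\<^sub>R axis i 1)) has_vector_derivative D) (at 0 within ?T) \<longleftrightarrow>
        ((\<lambda>t. g (x + t *\<^sub>R axis i 1)) has_vector_derivative D) (at 0 within ?T)" for D
    using has_vector_derivative_transform_within[OF _ zero_less_one \<open>0 \<in> ?T\<close>, of _ D] assms(1)
    by (metis (mono_tags, lifting) mem_Collect_eq)
  then show ?thesis unfolding partial_def vector_derivative_def by simp
qed

lemma pder_list_cong:
  assumes "\<forall>y\<in>cubeI. f y = g y" "x \<in> cubeI"
  shows "pderI L f x = pderI L g x"
  using assms by (induction L arbitrary: x) (simp_all add: partial_cong)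

lemma pder_list_append: "pder_list S (xs @ ys) f = pder_list S xs (pder_list S ys f)"
  by (induction xs) auto

lemma pder_list_snoc: "pder_list S (xs @ [i]) f = pder_list S xs (partial S i f)"
  by (simp add: pder_list_append)

lemma differentiable_on_cong:
  assumes "\<forall>x\<in>S. f x = g x" "g differentiable_on S"
  shows "f differentiable_on S"
  using assms differentiable_transform_within[OF _ zero_less_one]
  unfolding differentiable_on_def by metis

definition differentiable_upto :: "nat \<Rightarrow> (real^'n \<Rightarrow> real) \<Rightarrow> bool" where
  "differentiable_upto k f \<longleftrightarrow> (\<forall>xs. length xs < k \<longrightarrow> pderI xs f differentiable_on cubeI)"

lemma differentiable_upto_partial:
  "differentiable_upto (Suc k) f \<Longrightarrow> differentiable_upto k (partial cubeI i f)"
  unfolding differentiable_upto_def by (metis length_append_singleton not_less_eq pder_list_snoc)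

lemma differentiable_upto_Suc_imp_differentiable_on:
  "differentiable_upto (Suc k) f \<Longrightarrow> f differentiable_on cubeI"
  unfolding differentiable_upto_def by (metis length_0_conv pder_list.simps(1) zero_less_Suc)

lemma CN_on_imp_differentiable_upto:
  "CN_on cubeI N f \<Longrightarrow> k \<le> N \<Longrightarrow> differentiable_upto k f"
  unfolding CN_on_def differentiable_upto_def by auto

lemma CN_on_pder_list_differentiable_on:
  "CN_on cubeI N f \<Longrightarrow> length L < N \<Longrightarrow> pderI L f differentiable_on cubeI"
  unfolding CN_on_def by auto

section \<open>Quadratic polynomials and affine rescaling\<close>

definition quad_poly :: "real \<Rightarrow> real^'n \<Rightarrow> real^'n^'n \<Rightarrow> real^'n \<Rightarrow> real" where
  "quad_poly a b M x = a + b \<bullet> x + (M *v x) \<bullet> x"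

lemma has_derivative_quad_poly:
  "(quad_poly a b M has_derivative (\<lambda>h. b \<bullet> h + ((M *v h) \<bullet> x + (M *v x) \<bullet> h))) (at x within S)"
  unfolding quad_poly_def
  by (auto intro!: derivative_eq_intros bounded_linear.has_derivative[OF matrix_vector_mul_bounded_linear])

lemma differentiable_on_quad_poly: "quad_poly a b M differentiable_on S"
  using has_derivative_quad_poly unfolding differentiable_on_def differentiable_def by blast

lemma partial_quad_poly:
  assumes "x \<in> cubeI"
  shows "partial cubeI i (quad_poly a b M) x = quad_poly (b$i) (\<chi> j. M$i$j + M$j$i) 0 x"
  unfolding partial_eq_derivative[OF has_derivative_quad_poly assms]
  by (simp add: quad_poly_def inner_vec_def matrix_vector_mult_def axis_def sum.distrib algebra_simps
      if_distrib if_distribR sum_distrib_left cong: if_cong)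

lemma pder_list_quad_poly_eq_quad_poly:
  fixes M :: "real^'n^'n"
  shows "\<exists>a' b' M'. \<forall>x\<in>cubeI. pderI L (quad_poly a b M) x = quad_poly a' b' M' x"
proof (induction L arbitrary: a b M rule: rev_induct)
  case Nil then show ?case by auto
next
  case (snoc i L)
  obtain a' b' M' where h: "\<forall>x\<in>cubeI. pderI L (quad_poly (b$i) (\<chi> j. M$i$j + M$j$i) 0) x = quad_poly a' b' M' x"
    using snoc by blast
  have "pderI (L @ [i]) (quad_poly a b M) x = quad_poly a' b' M' x" if x: "x \<in> cubeI" for x
  proof -
    have "pderI (L @ [i]) (quad_poly a b M) x = pderI L (quad_poly (b$i) (\<chi> j. M$i$j + M$j$i) 0) x"
      unfolding pder_list_snoc by (rule pder_list_cong[OF _ x]) (simp add: partial_quad_poly)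
    then show ?thesis using h x by simp
  qed
  then show ?case by blast
qed

lemma differentiable_on_pder_list_quad_poly: "pderI L (quad_poly a b M) differentiable_on cubeI"
  using pder_list_quad_poly_eq_quad_poly[of L a b M] differentiable_on_cong differentiable_on_quad_poly
  by metis

lemma continuous_on_pder_list_quad_poly: "continuous_on cubeI (pderI L (quad_poly a b M))"
  using differentiable_on_pder_list_quad_poly differentiable_imp_continuous_on by blast

lemma pder_list_const: "x \<in> cubeI \<Longrightarrow> pderI L (\<lambda>_. a) x = (if L = [] then a else 0)"
proof (induction L arbitrary: a rule: rev_induct)
  case Nil then show ?case by simp
next
  case (snoc i L)
  have "partial cubeI i (\<lambda>_. a) y = 0" if "y \<in> cubeI" for y
    using partial_eq_derivative[OF has_derivative_const that] by simp
  then have "pderI (L @ [i]) (\<lambda>_. a) x = pderI L (\<lambda>_. 0) x"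
    unfolding pder_list_snoc by (intro pder_list_cong[OF _ snoc.prems]) simp
  then show ?case using snoc by simp
qed

lemma pder_list_quad_poly_1:
  "x \<in> cubeI \<Longrightarrow> pderI [i] (quad_poly a b M) x = b$i + (\<Sum>j\<in>UNIV. (M$i$j + M$j$i) * x$j)"
  by (simp add: partial_quad_poly quad_poly_def inner_vec_def)

lemma pder_list_quad_poly_2:
  assumes x: "x \<in> cubeI"
  shows "pderI [i,j] (quad_poly a b M) x = M$j$i + M$i$j"
proof -
  have "pderI [i,j] (quad_poly a b M) x = partial cubeI i (quad_poly (b$j) (\<chi> k. M$j$k + M$k$j) 0) x"
    using partial_cong[OF ballI[OF partial_quad_poly] x] by simp
  also have "\<dots> = M$j$i + M$i$j" using x by (simp add: partial_quad_poly quad_poly_def flip: zero_vec_def)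
  finally show ?thesis .
qed

lemma pder_list_quad_poly_vanish:
  fixes M :: "real^'n^'n"
  assumes x: "x \<in> cubeI" and L: "3 \<le> length L"
  shows "pderI L (quad_poly a b M) x = 0"
proof -
  have "L = take (length L - 3) L @ drop (length L - 3) L" "length (drop (length L - 3) L) = 3"
    using L by auto
  then obtain L0 L1 where "L = L0 @ L1" "length L1 = 3" by blast
  then obtain L0 i j k where L_eq: "L = L0 @ [i, j, k]"
    by (auto simp: numeral_3_eq_3 length_Suc_conv)
  have "pderI [i,j,k] (quad_poly a b M) y = 0" if y: "y \<in> cubeI" for y
  proof -
    have "pderI [i,j,k] (quad_poly a b M) y = partial cubeI i (\<lambda>_. M$k$j + M$j$k) y"
      using partial_cong[OF ballI[OF pder_list_quad_poly_2] y] by simp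
    also have "\<dots> = 0" using pder_list_const[OF y, of "[i]"] by simp
    finally show ?thesis .
  qed
  then have "pderI L0 (pderI [i,j,k] (quad_poly a b M)) x = pderI L0 (\<lambda>_. 0) x"
    by (intro pder_list_cong[OF _ x]) simp
  then show ?thesis using pder_list_const[OF x, of L0 0] by (simp add: L_eq pder_list_append)
qed

lemma partial_rescale_add_quad_poly:
  fixes F :: "real^'n \<Rightarrow> real"
  assumes F: "F differentiable_on cubeI" and A: "\<forall>\<xi>\<in>cubeI. \<rho> *\<^sub>R \<xi> + c \<in> cubeI"
    and z: "z \<in> cubeI"
  shows "partial cubeI i (\<lambda>\<xi>. s * F (\<rho> *\<^sub>R \<xi> + c) + quad_poly a b M \<xi>) z
         = s * \<rho> * partial cubeI i F (\<rho> *\<^sub>R z + c) + partial cubeI i (quad_poly a b M) z"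
proof -
  have Az: "\<rho> *\<^sub>R z + c \<in> cubeI" using A z by blast
  obtain DF where DF: "(F has_derivative DF) (at (\<rho> *\<^sub>R z + c) within cubeI)"
    using F Az unfolding differentiable_on_def differentiable_def by blast
  have l: "((\<lambda>\<xi>. \<rho> *\<^sub>R \<xi> + c) has_derivative (\<lambda>h. \<rho> *\<^sub>R h)) (at z within cubeI)"
    by (auto intro!: derivative_eq_intros)
  have "(F has_derivative DF) (at ((\<lambda>\<xi>. \<rho> *\<^sub>R \<xi> + c) z) within (\<lambda>\<xi>. \<rho> *\<^sub>R \<xi> + c) ` cubeI)"
    using DF A by (auto intro: has_derivative_subset)
  from diff_chain_within[OF l this]
  have "((\<lambda>\<xi>. F (\<rho> *\<^sub>R \<xi> + c)) has_derivative (\<lambda>h. DF (\<rho> *\<^sub>R h))) (at z within cubeI)"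
    by (simp add: o_def)
  from has_derivative_add[OF has_derivative_mult_right[OF this] has_derivative_quad_poly]
  have "partial cubeI i (\<lambda>\<xi>. s * F (\<rho> *\<^sub>R \<xi> + c) + quad_poly a b M \<xi>) z
        = s * DF (\<rho> *\<^sub>R axis i 1) + (b \<bullet> axis i 1 + ((M *v axis i 1) \<bullet> z + (M *v z) \<bullet> axis i 1))"
    by (rule partial_eq_derivative[OF _ z])
  moreover have "partial cubeI i (quad_poly a b M) z
      = b \<bullet> axis i 1 + ((M *v axis i 1) \<bullet> z + (M *v z) \<bullet> axis i 1)"
    by (rule partial_eq_derivative[OF has_derivative_quad_poly z])
  moreover have "DF (\<rho> *\<^sub>R axis i 1) = \<rho> * partial cubeI i F (\<rho> *\<^sub>R z + c)"
    using partial_eq_derivative[OF DF Az] has_derivative_linear[OF DF] by (simp add: linear_scale)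
  ultimately show ?thesis by simp
qed

lemma pder_list_rescale_add_quad_poly:
  fixes F :: "real^'n \<Rightarrow> real" and M :: "real^'n^'n"
  assumes "differentiable_upto (length L) F" "\<forall>\<xi>\<in>cubeI. \<rho> *\<^sub>R \<xi> + c \<in> cubeI" "\<xi> \<in> cubeI"
  shows "pderI L (\<lambda>\<xi>. s * F (\<rho> *\<^sub>R \<xi> + c) + quad_poly a b M \<xi>) \<xi>
         = s * \<rho> ^ length L * pderI L F (\<rho> *\<^sub>R \<xi> + c) + pderI L (quad_poly a b M) \<xi>"
  using assms
proof (induction L arbitrary: F s a b M \<xi> rule: rev_induct)
  case Nil then show ?case by simp
next
  case (snoc i L)
  have F: "differentiable_upto (Suc (length L)) F" using snoc.prems(1) by simp
  let ?r = "\<chi> j. M$i$j + M$j$i"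
  have "\<forall>z\<in>cubeI. partial cubeI i (\<lambda>\<xi>. s * F (\<rho> *\<^sub>R \<xi> + c) + quad_poly a b M \<xi>) z
     = (s * \<rho>) * partial cubeI i F (\<rho> *\<^sub>R z + c) + quad_poly (b$i) ?r 0 z"
    by (auto simp: partial_rescale_add_quad_poly[OF differentiable_upto_Suc_imp_differentiable_on[OF F]
          snoc.prems(2)] partial_quad_poly)
  then have "pderI (L @ [i]) (\<lambda>\<xi>. s * F (\<rho> *\<^sub>R \<xi> + c) + quad_poly a b M \<xi>) \<xi>
      = pderI L (\<lambda>z. (s * \<rho>) * partial cubeI i F (\<rho> *\<^sub>R z + c) + quad_poly (b$i) ?r 0 z) \<xi>"
    unfolding pder_list_snoc by (rule pder_list_cong[OF _ snoc.prems(3)])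
  also have "\<dots> = (s * \<rho>) * \<rho> ^ length L * pderI L (partial cubeI i F) (\<rho> *\<^sub>R \<xi> + c)
      + pderI L (quad_poly (b$i) ?r 0) \<xi>"
    by (rule snoc.IH[OF differentiable_upto_partial[OF F] snoc.prems(2,3)])
  also have "pderI L (quad_poly (b$i) ?r 0) \<xi> = pderI (L @ [i]) (quad_poly a b M) \<xi>"
    unfolding pder_list_snoc by (rule pder_list_cong[OF _ snoc.prems(3)]) (simp add: partial_quad_poly)
  finally show ?case by (simp add: pder_list_snoc)
qed

lemma CN_on_rescale_add_quad_poly:
  fixes F :: "real^'n \<Rightarrow> real" and M :: "real^'n^'n"
  assumes F: "CN_on cubeI N F" and A: "\<forall>\<xi>\<in>cubeI. \<rho> *\<^sub>R \<xi> + c \<in> cubeI"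
  shows "CN_on cubeI N (\<lambda>\<xi>. s * F (\<rho> *\<^sub>R \<xi> + c) + quad_poly a b M \<xi>)"
  unfolding CN_on_def
proof (intro conjI allI impI)
  let ?G = "\<lambda>\<xi>. s * F (\<rho> *\<^sub>R \<xi> + c) + quad_poly a b M \<xi>"
  let ?H = "\<lambda>xs \<xi>. (s * \<rho> ^ length xs) * pderI xs F (\<rho> *\<^sub>R \<xi> + c) + pderI xs (quad_poly a b M) \<xi>"
  have eq: "\<forall>\<xi>\<in>cubeI. pderI xs ?G \<xi> = ?H xs \<xi>" if "length xs \<le> N" for xs
    using pder_list_rescale_add_quad_poly[OF CN_on_imp_differentiable_upto[OF F that] A] by auto
  have rescale: "(\<lambda>\<xi>. \<rho> *\<^sub>R \<xi> + c) ` cubeI \<subseteq> cubeI" using A by blast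
  fix xs :: "'n list"
  {
    assume l: "length xs \<le> N"
    have "continuous_on cubeI (pderI xs F)" using F l unfolding CN_on_def by blast
    then have "continuous_on cubeI (\<lambda>\<xi>. pderI xs F (\<rho> *\<^sub>R \<xi> + c))"
      by (rule continuous_on_compose2[OF _ _ rescale]) (auto intro!: continuous_intros)
    then have "continuous_on cubeI (?H xs)"
      by (intro continuous_on_add continuous_on_mult_left continuous_on_pder_list_quad_poly)
    then show "continuous_on cubeI (pderI xs ?G)" by (rule continuous_on_eq) (use eq[OF l] in auto)
  }
  {
    assume l: "length xs < N"
    have "pderI xs F differentiable_on cubeI" using F l by (rule CN_on_pder_list_differentiable_on)
    moreover have "(\<lambda>\<xi>. \<rho> *\<^sub>R \<xi> + c) differentiable_on cubeI" by (intro derivative_intros)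
    ultimately have "(\<lambda>\<xi>. pderI xs F (\<rho> *\<^sub>R \<xi> + c)) differentiable_on cubeI"
      using differentiable_on_compose differentiable_on_subset[OF _ rescale] by blast
    then have H: "?H xs differentiable_on cubeI"
      by (intro differentiable_on_add differentiable_on_mult differentiable_on_const
          differentiable_on_pder_list_quad_poly)
    show "pderI xs ?G differentiable_on cubeI"
      using differentiable_on_cong[OF eq H] l by simp
  }
qed

section \<open>Symmetry of mixed partial derivatives\<close>

lemma interior_partial_has_derivative:
  fixes F :: "real^'n \<Rightarrow> real"
  assumes "F differentiable_on cubeI" "z \<in> box (-1) 1"
  obtains D where "(F has_derivative D) (at z)" "partial cubeI i F z = D (axis i 1)"
proof -
  have z: "z \<in> cubeI" using assms(2) interior_cubeI interior_subset by blast
  then obtain D where D: "(F has_derivative D) (at z within cubeI)"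
    using assms(1) unfolding differentiable_on_def differentiable_def by blast
  have "at z within cubeI = at z" using assms(2) interior_cubeI at_within_interior by metis
  then show ?thesis using that D partial_eq_derivative[OF D z] by simp
qed

lemma has_real_derivative_along_axis:
  fixes F :: "real^'n \<Rightarrow> real"
  assumes "F differentiable_on cubeI" "p + s0 *\<^sub>R axis i 1 \<in> box (-1) 1"
  shows "((\<lambda>s. F (p + s *\<^sub>R axis i 1)) has_real_derivative partial cubeI i F (p + s0 *\<^sub>R axis i 1))
           (at s0)"
proof -
  obtain D where D: "(F has_derivative D) (at (p + s0 *\<^sub>R axis i 1))"
    and pD: "partial cubeI i F (p + s0 *\<^sub>R axis i 1) = D (axis i 1)"
    using interior_partial_has_derivative[OF assms] by blast
  have l: "((\<lambda>s. p + s *\<^sub>R axis i 1) has_derivative (\<lambda>t. t *\<^sub>R axis i 1)) (at s0)"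
    by (auto intro!: derivative_eq_intros)
  have "((\<lambda>s. F (p + s *\<^sub>R axis i 1)) has_derivative (\<lambda>t. D (t *\<^sub>R axis i 1))) (at s0)"
    using diff_chain_at[OF l D] by (simp add: o_def)
  moreover have "(\<lambda>t. D (t *\<^sub>R axis i 1)) = (*) (D (axis i 1))"
    using has_derivative_linear[OF D] by (simp add: linear_scale fun_eq_iff)
  ultimately show ?thesis unfolding has_field_derivative_def pD by simp
qed

definition second_difference :: "(real^'n \<Rightarrow> real) \<Rightarrow> 'n \<Rightarrow> 'n \<Rightarrow> real^'n \<Rightarrow> real \<Rightarrow> real" where
  "second_difference F i j x h =
     F (x + h *\<^sub>R axis j 1 + h *\<^sub>R axis i 1) - F (x + h *\<^sub>R axis i 1) - F (x + h *\<^sub>R axis j 1) + F x"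

lemma second_difference_commute: "second_difference F i j x h = second_difference F j i x h"
  by (simp add: second_difference_def add_ac)

lemma second_difference_mean_value:
  fixes F :: "real^'n \<Rightarrow> real"
  assumes F: "F differentiable_on cubeI" and h: "0 < h" and x: "cball x (2 * h) \<subseteq> box (-1) 1"
  obtains \<theta> where "0 < \<theta>" "\<theta> < h"
    "second_difference F i j x h = h * (partial cubeI i F (x + h *\<^sub>R axis j 1 + \<theta> *\<^sub>R axis i 1)
                                     - partial cubeI i F (x + \<theta> *\<^sub>R axis i 1))"
proof -
  let ?p = "x + h *\<^sub>R axis j 1"
  define \<phi> where "\<phi> = (\<lambda>s. F (?p + s *\<^sub>R axis i 1) - F (x + s *\<^sub>R axis i 1))"
  define \<phi>' where "\<phi>' = (\<lambda>s. partial cubeI i F (?p + s *\<^sub>R axis i 1) - partial cubeI i F (x + s *\<^sub>R axis i 1))"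
  have inside: "?p + s *\<^sub>R axis i 1 \<in> box (-1) 1" "x + s *\<^sub>R axis i 1 \<in> box (-1) 1"
    if "0 \<le> s" "s \<le> h" for s
  proof -
    have "norm (- (h *\<^sub>R axis j 1) - s *\<^sub>R axis i (1::real)) \<le> h + s"
      using norm_triangle_ineq4[of "- (h *\<^sub>R axis j (1::real))" "s *\<^sub>R axis i 1"] that h by simp
    then have "?p + s *\<^sub>R axis i 1 \<in> cball x (2 * h)" "x + s *\<^sub>R axis i 1 \<in> cball x (2 * h)"
      using that h by (simp_all add: dist_norm)
    then show "?p + s *\<^sub>R axis i 1 \<in> box (-1) 1" "x + s *\<^sub>R axis i 1 \<in> box (-1) 1" using x by auto
  qed
  have der: "(\<phi> has_derivative (*) (\<phi>' s)) (at s within {0..h})" if "0 \<le> s" "s \<le> h" for s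
  proof -
    have "(\<phi> has_real_derivative \<phi>' s) (at s)"
      unfolding \<phi>_def \<phi>'_def by (intro DERIV_diff has_real_derivative_along_axis[OF F] inside that)
    then show ?thesis unfolding has_field_derivative_def by (rule has_derivative_at_withinI)
  qed
  obtain \<theta> where "\<theta> \<in> {0<..<h}" "\<phi> h - \<phi> 0 = \<phi>' \<theta> * h"
    using mvt_simple[OF h der] by auto
  then show ?thesis using that by (auto simp: second_difference_def \<phi>_def \<phi>'_def mult.commute)
qed

lemma linear_approx_increment:
  fixes G :: "'a::real_normed_vector \<Rightarrow> 'b::real_normed_vector"
  assumes "linear DG"
    and approx: "\<And>y. norm (y - x) < d \<Longrightarrow> norm (G y - G x - DG (y - x)) \<le> e * norm (y - x)"
    and "norm u < d" "norm v < d"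
  shows "norm (G (x + u) - G (x + v) - DG (u - v)) \<le> e * (norm u + norm v)"
proof -
  have "G (x + u) - G (x + v) - DG (u - v)
      = (G (x + u) - G x - DG u) - (G (x + v) - G x - DG v)"
    using assms(1) by (simp add: linear_diff algebra_simps)
  also have "norm \<dots> \<le> norm (G (x + u) - G x - DG u) + norm (G (x + v) - G x - DG v)"
    by (rule norm_triangle_ineq4)
  also have "\<dots> \<le> e * norm u + e * norm v"
    using approx[of "x + u"] approx[of "x + v"] assms(3,4) by (intro add_mono) simp_all
  finally show ?thesis by (simp add: distrib_left)
qed

lemma second_difference_approx:
  fixes F :: "real^'n \<Rightarrow> real"
  assumes F: "F differentiable_on cubeI" and G: "partial cubeI i F differentiable_on cubeI"
    and x: "x \<in> box (-1) 1" and e: "e > 0"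
  obtains d where "d > 0" "\<And>h. 0 < h \<Longrightarrow> h < d \<Longrightarrow>
     \<bar>second_difference F i j x h - h\<^sup>2 * partial cubeI j (partial cubeI i F) x\<bar> \<le> 3 * e * h\<^sup>2"
proof -
  let ?G = "partial cubeI i F"
  obtain d0 where d0: "d0 > 0" "ball x d0 \<subseteq> box (-1) 1"
    using x open_box open_contains_ball by blast
  obtain DG where DG: "(?G has_derivative DG) (at x)"
    and pDG: "partial cubeI j ?G x = DG (axis j 1)"
    using interior_partial_has_derivative[OF G x] by blast
  obtain d1 where d1: "d1 > 0"
    and approx: "\<And>y. norm (y - x) < d1 \<Longrightarrow> norm (?G y - ?G x - DG (y - x)) \<le> e * norm (y - x)"
    using DG e unfolding has_derivative_at_alt by blast
  have "\<bar>second_difference F i j x h - h\<^sup>2 * DG (axis j 1)\<bar> \<le> 3 * e * h\<^sup>2"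
    if h: "0 < h" "h < min d0 d1 / 2" for h
  proof -
    have "cball x (2 * h) \<subseteq> box (-1) 1" using d0 h by (auto simp: subset_eq)
    then obtain \<theta> where \<theta>: "0 < \<theta>" "\<theta> < h" and mv:
      "second_difference F i j x h = h * (?G (x + h *\<^sub>R axis j 1 + \<theta> *\<^sub>R axis i 1) - ?G (x + \<theta> *\<^sub>R axis i 1))"
      using second_difference_mean_value[OF F h(1)] by blast
    define u where "u = \<theta> *\<^sub>R axis i 1 + h *\<^sub>R axis j (1::real)"
    define v where "v = \<theta> *\<^sub>R axis i (1::real)"
    have "norm u \<le> 2 * h"
      using norm_triangle_le[of "\<theta> *\<^sub>R axis i (1::real)" "h *\<^sub>R axis j 1"] \<theta> by (simp add: u_def)
    moreover have "norm v \<le> h" using \<theta> by (simp add: v_def)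
    ultimately have "\<bar>?G (x + u) - ?G (x + v) - DG (u - v)\<bar> \<le> e * (2 * h + h)"
      using linear_approx_increment[OF has_derivative_linear[OF DG] approx, where u=u and v=v] h e
      by (simp, smt (verit) mult_left_mono)
    moreover have "second_difference F i j x h - h\<^sup>2 * DG (axis j 1) = h * (?G (x + u) - ?G (x + v) - DG (u - v))"
      using has_derivative_linear[OF DG]
      by (simp add: mv u_def v_def linear_scale power2_eq_square algebra_simps)
    ultimately show ?thesis
      using h mult_left_mono[of _ "3 * e * h" h] by (simp add: abs_mult power2_eq_square mult_ac)
  qed
  then show ?thesis using that[of "min d0 d1 / 2"] d0 d1 pDG by auto
qed

lemma partial_commute_interior:
  fixes F :: "real^'n \<Rightarrow> real"
  assumes F: "F differentiable_on cubeI" and Gi: "partial cubeI i F differentiable_on cubeI"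
    and Gj: "partial cubeI j F differentiable_on cubeI" and x: "x \<in> box (-1) 1"
  shows "partial cubeI j (partial cubeI i F) x = partial cubeI i (partial cubeI j F) x"
proof -
  let ?P1 = "partial cubeI j (partial cubeI i F) x" and ?P2 = "partial cubeI i (partial cubeI j F) x"
  have bound: "\<bar>?P1 - ?P2\<bar> \<le> 6 * e" if e: "e > 0" for e
  proof -
    obtain d1 where d1: "d1 > 0" "\<And>h. 0 < h \<Longrightarrow> h < d1 \<Longrightarrow>
       \<bar>second_difference F i j x h - h\<^sup>2 * ?P1\<bar> \<le> 3 * e * h\<^sup>2"
      using second_difference_approx[OF F Gi x e] by blast
    obtain d2 where d2: "d2 > 0" "\<And>h. 0 < h \<Longrightarrow> h < d2 \<Longrightarrow>
       \<bar>second_difference F j i x h - h\<^sup>2 * ?P2\<bar> \<le> 3 * e * h\<^sup>2"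
      using second_difference_approx[OF F Gj x e] by blast
    define h where "h = min d1 d2 / 2"
    have h: "0 < h" "h < d1" "h < d2" using d1 d2 by (auto simp: h_def)
    have "h\<^sup>2 * \<bar>?P1 - ?P2\<bar> = \<bar>h\<^sup>2 * (?P1 - ?P2)\<bar>" by (simp add: abs_mult)
    also have "\<dots> = \<bar>(second_difference F i j x h - h\<^sup>2 * ?P2)
        - (second_difference F i j x h - h\<^sup>2 * ?P1)\<bar>"
      by (simp add: algebra_simps)
    also have "\<dots> \<le> 3 * e * h\<^sup>2 + 3 * e * h\<^sup>2"
      using d1(2)[OF h(1,2)] d2(2)[OF h(1,3)]
      unfolding second_difference_commute[of F j i x h]
      using abs_triangle_ineq4[of "second_difference F i j x h - h\<^sup>2 * ?P2"
          "second_difference F i j x h - h\<^sup>2 * ?P1"]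
      by linarith
    also have "\<dots> = h\<^sup>2 * (6 * e)" by simp
    finally show ?thesis using h by (simp add: mult_le_cancel_left)
  qed
  have "\<bar>?P1 - ?P2\<bar> \<le> 0 + e" if "e > 0" for e using bound[of "e / 6"] that by simp
  then have "\<bar>?P1 - ?P2\<bar> \<le> 0" by (rule field_le_epsilon)
  then show ?thesis by simp
qed

text \<open>The one-sided partials at the boundary of the cube are reached by continuity from the interior.\<close>

lemma partial_commute:
  fixes F :: "real^'n \<Rightarrow> real"
  assumes F: "F differentiable_on cubeI" and Gi: "partial cubeI i F differentiable_on cubeI"
    and Gj: "partial cubeI j F differentiable_on cubeI"
    and c1: "continuous_on cubeI (partial cubeI j (partial cubeI i F))"
    and c2: "continuous_on cubeI (partial cubeI i (partial cubeI j F))"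
    and x: "x \<in> cubeI"
  shows "partial cubeI j (partial cubeI i F) x = partial cubeI i (partial cubeI j F) x"
proof -
  let ?f = "\<lambda>x. \<bar>partial cubeI j (partial cubeI i F) x - partial cubeI i (partial cubeI j F) x\<bar>"
  have "continuous_on (closure (box (-1) 1)) ?f"
    unfolding closure_box_eq_cubeI using c1 c2 by (intro continuous_intros)
  from continuous_le_on_closure[OF this, of x 0]
  have "?f x \<le> 0" using x partial_commute_interior[OF F Gi Gj] closure_box_eq_cubeI by auto
  then show ?thesis by simp
qed

lemma pder_list_swap:
  fixes f :: "real^'n \<Rightarrow> real"
  assumes f: "CN_on cubeI N f" and len: "length xs + 2 + length ys \<le> N" and x: "x \<in> cubeI"
  shows "pderI (xs @ i # j # ys) f x = pderI (xs @ j # i # ys) f x"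
proof -
  have "pderI (i # j # ys) f y = pderI (j # i # ys) f y" if "y \<in> cubeI" for y
    unfolding pder_list.simps
  proof (rule partial_commute[OF _ _ _ _ _ that])
    show "pderI ys f differentiable_on cubeI" "partial cubeI i (pderI ys f) differentiable_on cubeI"
      "partial cubeI j (pderI ys f) differentiable_on cubeI"
      using CN_on_pder_list_differentiable_on[OF f, of ys] CN_on_pder_list_differentiable_on[OF f, of "i # ys"]
        CN_on_pder_list_differentiable_on[OF f, of "j # ys"] len by simp_all
    have cont: "continuous_on cubeI (pderI L f)" if "length L \<le> N" for L
      using f that unfolding CN_on_def by blast
    show "continuous_on cubeI (partial cubeI i (partial cubeI j (pderI ys f)))"
      "continuous_on cubeI (partial cubeI j (partial cubeI i (pderI ys f)))"
      using cont[of "i # j # ys"] cont[of "j # i # ys"] len by simp_all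
  qed
  then have "pderI xs (pderI (i # j # ys) f) x = pderI xs (pderI (j # i # ys) f) x"
    by (intro pder_list_cong[OF _ x]) simp
  then show ?thesis by (simp add: pder_list_append)
qed

lemma pder_list_move_front:
  fixes f :: "real^'n \<Rightarrow> real"
  assumes f: "CN_on cubeI N f" and len: "length (u @ a # v) \<le> N" and x: "x \<in> cubeI"
  shows "pderI (u @ a # v) f x = pderI (a # u @ v) f x"
  using len x
proof (induction u arbitrary: x)
  case Nil then show ?case by simp
next
  case (Cons b u)
  have "pderI ((b # u) @ a # v) f x = partial cubeI b (pderI (a # u @ v) f) x"
    using Cons by (simp add: partial_cong)
  also have "\<dots> = pderI ([] @ b # a # (u @ v)) f x" by simp
  also have "\<dots> = pderI ([] @ a # b # (u @ v)) f x"
    by (rule pder_list_swap[OF f _ Cons.prems(2)]) (use Cons.prems(1) in simp)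
  finally show ?case by simp
qed

lemma pder_list_perm:
  fixes f :: "real^'n \<Rightarrow> real"
  assumes f: "CN_on cubeI N f" and "mset L1 = mset L2" "length L1 \<le> N" "x \<in> cubeI"
  shows "pderI L1 f x = pderI L2 f x"
  using assms(2-)
proof (induction L1 arbitrary: L2 x)
  case Nil then show ?case by simp
next
  case (Cons a L1)
  have "a \<in> set L2" using Cons.prems(1) by (metis list.set_intros(1) set_mset_mset)
  then obtain u v where L2: "L2 = u @ a # v" by (meson split_list)
  have "mset L1 = mset (u @ v)" using Cons.prems(1) L2 by simp
  then have "pderI (a # L1) f x = pderI (a # u @ v) f x"
    using Cons by (simp add: partial_cong)
  also have "\<dots> = pderI L2 f x"
    using pder_list_move_front[OF f _ Cons.prems(3), of u a v] mset_eq_length[OF Cons.prems(1)]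
      Cons.prems(2) L2 by simp
  finally show ?case .
qed

lemma count_list_mi_list: "count_list (mi_list (\<alpha> :: 'n::finite \<Rightarrow> nat)) i = \<alpha> i"
proof -
  obtain xs where xs: "mset xs = (\<Sum>j\<in>UNIV. replicate_mset (\<alpha> j) j)" using ex_mset by blast
  have "\<forall>i. count_list xs i = \<alpha> i" by (simp add: count_mset[symmetric] xs count_sum)
  then have "\<forall>i. count_list (mi_list \<alpha>) i = \<alpha> i"
    unfolding mi_list_def by (rule someI)
  then show ?thesis by blast
qed

lemma mi_order_count_list: "mi_order (\<lambda>i. count_list L (i::'n::finite)) = length L"
  unfolding mi_order_def by (rule sum_count_set) auto

lemma length_mi_list: "length (mi_list (\<alpha> :: 'n::finite \<Rightarrow> nat)) = mi_order \<alpha>"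
  using mi_order_count_list[of "mi_list \<alpha>"] by (simp add: count_list_mi_list)

lemma pder_list_eq_pder:
  fixes f :: "real^'n::finite \<Rightarrow> real"
  assumes "CN_on cubeI N f" "length L \<le> N" "x \<in> cubeI"
  shows "pderI L f x = pder cubeI (\<lambda>i. count_list L i) f x"
  unfolding pder_def
  by (rule pder_list_perm[OF assms(1) _ assms(2,3)])
    (simp add: multiset_eq_iff count_mset count_list_mi_list)

section \<open>Taylor estimates along segments\<close>
lemma abs_le_by_dominating_derivative:
  fixes R R' B B' :: "real \<Rightarrow> real"
  assumes s: "0 \<le> s" "s \<le> 1"
    and dR: "\<forall>t\<in>{0..1}. (R has_real_derivative R' t) (at t within {0..1})"
    and dB: "\<forall>t\<in>{0..1}. (B has_real_derivative B' t) (at t within {0..1})"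
    and le: "\<forall>t\<in>{0..1}. \<bar>R' t\<bar> \<le> B' t" and R0: "R 0 = 0" and B0: "B 0 = 0"
  shows "\<bar>R s\<bar> \<le> B s"
proof (cases "s = 0")
  case True then show ?thesis using R0 B0 by simp
next
  case False
  then have s0: "0 < s" using s by simp
  have sub: "{0..s} \<subseteq> {0..1::real}" using s by auto
  have d1: "((\<lambda>t. B t - R t) has_derivative (*) (B' t - R' t)) (at t within {0..s})" if "0 \<le> t" "t \<le> s" for t
  proof -
    have "((\<lambda>t. B t - R t) has_real_derivative (B' t - R' t)) (at t within {0..1})"
      using dR dB that s by (intro DERIV_diff) auto
    then show ?thesis unfolding has_field_derivative_def[symmetric]
      using has_field_derivative_subset sub by blast
  qed
  have d2: "((\<lambda>t. B t + R t) has_derivative (*) (B' t + R' t)) (at t within {0..s})" if "0 \<le> t" "t \<le> s" for t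
  proof -
    have "((\<lambda>t. B t + R t) has_real_derivative (B' t + R' t)) (at t within {0..1})"
      using dR dB that s by (intro DERIV_add) auto
    then show ?thesis unfolding has_field_derivative_def[symmetric]
      using has_field_derivative_subset sub by blast
  qed
  obtain x1 where x1: "x1 \<in> {0<..<s}" "(B s - R s) - (B 0 - R 0) = (B' x1 - R' x1) * (s - 0)"
    using mvt_simple[OF s0 d1] by blast
  obtain x2 where x2: "x2 \<in> {0<..<s}" "(B s + R s) - (B 0 + R 0) = (B' x2 + R' x2) * (s - 0)"
    using mvt_simple[OF s0 d2] by blast
  have "\<bar>R' x1\<bar> \<le> B' x1" "\<bar>R' x2\<bar> \<le> B' x2" using le x1 x2 s by auto
  then have "B' x1 - R' x1 \<ge> 0" "B' x2 + R' x2 \<ge> 0" by (auto simp: abs_le_iff)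
  then show ?thesis using x1 x2 R0 B0 s0
    by (auto simp: abs_le_iff) (smt (verit) mult_nonneg_nonneg)+
qed

lemma taylor1_interval:
  fixes g0 g1 :: "real \<Rightarrow> real"
  assumes d0: "\<forall>t\<in>{0..1}. (g0 has_real_derivative g1 t) (at t within {0..1})"
    and K: "\<forall>t\<in>{0..1}. \<bar>g1 t\<bar> \<le> K" and s: "0 \<le> s" "s \<le> 1"
  shows "\<bar>g0 s - g0 0\<bar> \<le> K * s"
proof -
  have "\<bar>(\<lambda>t. g0 t - g0 0) s\<bar> \<le> (\<lambda>t. K * t) s"
    by (rule abs_le_by_dominating_derivative[where R'=g1 and B'="\<lambda>_. K"]) (use d0 K s in \<open>auto intro!: derivative_eq_intros\<close>)
  then show ?thesis by simp
qed

lemma taylor2_interval: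
  fixes g0 g1 g2 :: "real \<Rightarrow> real"
  assumes d0: "\<forall>t\<in>{0..1}. (g0 has_real_derivative g1 t) (at t within {0..1})"
    and d1: "\<forall>t\<in>{0..1}. (g1 has_real_derivative g2 t) (at t within {0..1})"
    and K: "\<forall>t\<in>{0..1}. \<bar>g2 t\<bar> \<le> K" and s: "0 \<le> s" "s \<le> 1"
  shows "\<bar>g0 s - g0 0 - s * g1 0\<bar> \<le> K * s^2 / 2"
proof -
  have b: "\<forall>t\<in>{0..1}. \<bar>g1 t - g1 0\<bar> \<le> K * t" using taylor1_interval[OF d1 K] by auto
  have "\<bar>(\<lambda>t. g0 t - g0 0 - t * g1 0) s\<bar> \<le> (\<lambda>t. K * t^2 / 2) s"
    by (rule abs_le_by_dominating_derivative[where R'="\<lambda>t. g1 t - g1 0" and B'="\<lambda>t. K * t"])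
       (use d0 b s in \<open>auto intro!: derivative_eq_intros\<close>)
  then show ?thesis by simp
qed

lemma taylor3_interval:
  fixes g0 g1 g2 g3 :: "real \<Rightarrow> real"
  assumes d0: "\<forall>t\<in>{0..1}. (g0 has_real_derivative g1 t) (at t within {0..1})"
    and d1: "\<forall>t\<in>{0..1}. (g1 has_real_derivative g2 t) (at t within {0..1})"
    and d2: "\<forall>t\<in>{0..1}. (g2 has_real_derivative g3 t) (at t within {0..1})"
    and K: "\<forall>t\<in>{0..1}. \<bar>g3 t\<bar> \<le> K"
  shows "\<bar>g0 1 - g0 0 - g1 0 - g2 0 / 2\<bar> \<le> K / 6"
proof -
  have b: "\<forall>t\<in>{0..1}. \<bar>g1 t - g1 0 - t * g2 0\<bar> \<le> K * t^2 / 2" using taylor2_interval[OF d1 d2 K] by auto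
  have "\<bar>(\<lambda>t. g0 t - g0 0 - t * g1 0 - t^2 / 2 * g2 0) 1\<bar> \<le> (\<lambda>t. K * t^3 / 6) 1"
    by (rule abs_le_by_dominating_derivative[where R'="\<lambda>t. g1 t - g1 0 - t * g2 0" and B'="\<lambda>t. K * t^2 / 2"])
       (use d0 b in \<open>auto intro!: derivative_eq_intros simp: power2_eq_square power3_eq_cube\<close>)
  then show ?thesis by simp
qed

lemma has_real_derivative_along_segment:
  fixes G :: "real^'n \<Rightarrow> real"
  assumes G: "G differentiable_on cubeI" and c: "c \<in> cubeI" "c + v \<in> cubeI" and t: "t \<in> {0..1}"
  shows "((\<lambda>t. G (c + t *\<^sub>R v)) has_real_derivative (\<Sum>j\<in>UNIV. v$j * partial cubeI j G (c + t *\<^sub>R v)))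
           (at t within {0..1})"
proof -
  let ?z = "c + t *\<^sub>R v"
  have z: "?z \<in> cubeI" using segment_mem_cubeI c t by auto
  obtain D where D: "(G has_derivative D) (at ?z within cubeI)"
    using G z unfolding differentiable_on_def differentiable_def by blast
  have lin: "linear D" using D has_derivative_linear by blast
  have l: "((\<lambda>t. c + t *\<^sub>R v) has_derivative (\<lambda>s. s *\<^sub>R v)) (at t within {0..1})"
    by (auto intro!: derivative_eq_intros)
  have "(G has_derivative D) (at ((\<lambda>t. c + t *\<^sub>R v) t) within (\<lambda>t. c + t *\<^sub>R v) ` {0..1})"
    using D segment_mem_cubeI[OF c] by (auto intro: has_derivative_subset)
  from diff_chain_within[OF l this]
  have 1: "((\<lambda>t. G (c + t *\<^sub>R v)) has_derivative (\<lambda>s. D (s *\<^sub>R v))) (at t within {0..1})"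
    by (simp add: o_def)
  have "D v = D (\<Sum>j\<in>UNIV. v$j *\<^sub>R axis j 1)"
    using basis_expansion[of v] by (simp add: scalar_mult_eq_scaleR)
  also have "\<dots> = (\<Sum>j\<in>UNIV. v$j * D (axis j 1))"
    by (simp add: linear_sum[OF lin] linear_scale[OF lin])
  also have "\<dots> = (\<Sum>j\<in>UNIV. v$j * partial cubeI j G ?z)"
    using partial_eq_derivative[OF D z] by simp
  finally have Dv: "D v = (\<Sum>j\<in>UNIV. v$j * partial cubeI j G ?z)" .
  have eq: "(\<lambda>s. D (s *\<^sub>R v)) = (*) (\<Sum>j\<in>UNIV. v$j * partial cubeI j G ?z)"
    by (rule ext) (simp add: linear_scale[OF lin] Dv mult.commute)
  from 1 show ?thesis unfolding has_field_derivative_def by (simp only: eq)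
qed

lemma abs_sum_mult_le:
  fixes v :: "real^'n"
  assumes "\<And>j. \<bar>a j\<bar> \<le> K"
  shows "\<bar>\<Sum>j\<in>UNIV. v$j * a j\<bar> \<le> (\<Sum>j\<in>UNIV. \<bar>v$j\<bar>) * K"
proof -
  have "\<bar>\<Sum>j\<in>UNIV. v$j * a j\<bar> \<le> (\<Sum>j\<in>UNIV. \<bar>v$j * a j\<bar>)" by (rule sum_abs)
  also have "\<dots> \<le> (\<Sum>j\<in>UNIV. \<bar>v$j\<bar> * K)"
    by (intro sum_mono) (simp add: abs_mult assms mult_left_mono)
  also have "\<dots> = (\<Sum>j\<in>UNIV. \<bar>v$j\<bar>) * K" by (simp add: sum_distrib_right)
  finally show ?thesis .
qed

lemma taylor1_cubeI:
  fixes F :: "real^'n \<Rightarrow> real"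
  assumes F: "F differentiable_on cubeI" and K: "\<And>j z. z \<in> cubeI \<Longrightarrow> \<bar>partial cubeI j F z\<bar> \<le> K"
    and c: "c \<in> cubeI" "c + v \<in> cubeI"
  shows "\<bar>F (c + v) - F c\<bar> \<le> (\<Sum>j\<in>UNIV. \<bar>v$j\<bar>) * K"
proof -
  have "\<bar>(\<lambda>t. F (c + t *\<^sub>R v)) 1 - (\<lambda>t. F (c + t *\<^sub>R v)) 0\<bar> \<le> (\<Sum>j\<in>UNIV. \<bar>v$j\<bar>) * K * 1"
  proof (rule taylor1_interval)
    show "\<forall>t\<in>{0..1}. ((\<lambda>t. F (c + t *\<^sub>R v)) has_real_derivative (\<Sum>j\<in>UNIV. v$j * partial cubeI j F (c + t *\<^sub>R v))) (at t within {0..1})"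
      using has_real_derivative_along_segment[OF F c] by blast
    show "\<forall>t\<in>{0..1}. \<bar>\<Sum>j\<in>UNIV. v$j * partial cubeI j F (c + t *\<^sub>R v)\<bar> \<le> (\<Sum>j\<in>UNIV. \<bar>v$j\<bar>) * K"
      using segment_mem_cubeI[OF c] by (auto intro!: abs_sum_mult_le K)
  qed auto
  then show ?thesis by simp
qed

lemma taylor2_cubeI:
  fixes F :: "real^'n \<Rightarrow> real"
  assumes F: "F differentiable_on cubeI" and F1: "\<And>j. partial cubeI j F differentiable_on cubeI"
    and K: "\<And>j k z. z \<in> cubeI \<Longrightarrow> \<bar>partial cubeI k (partial cubeI j F) z\<bar> \<le> K"
    and c: "c \<in> cubeI" "c + v \<in> cubeI"
  shows "\<bar>F (c + v) - F c - (\<Sum>j\<in>UNIV. v$j * partial cubeI j F c)\<bar> \<le> (\<Sum>j\<in>UNIV. \<bar>v$j\<bar>)^2 * K / 2"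
proof -
  let ?S = "\<Sum>j\<in>UNIV. \<bar>v$j\<bar>"
  have K0: "K \<ge> 0" using K[OF c(1)] by (meson abs_ge_zero order_trans)
  have "\<bar>(\<lambda>t. F (c + t *\<^sub>R v)) 1 - (\<lambda>t. F (c + t *\<^sub>R v)) 0 - 1 * (\<lambda>t. \<Sum>j\<in>UNIV. v$j * partial cubeI j F (c + t *\<^sub>R v)) 0\<bar>
        \<le> (?S * (?S * K)) * 1^2 / 2"
  proof (rule taylor2_interval)
    show "\<forall>t\<in>{0..1}. ((\<lambda>t. F (c + t *\<^sub>R v)) has_real_derivative (\<Sum>j\<in>UNIV. v$j * partial cubeI j F (c + t *\<^sub>R v))) (at t within {0..1})"
      using has_real_derivative_along_segment[OF F c] by blast
    show "\<forall>t\<in>{0..1}. ((\<lambda>t. \<Sum>j\<in>UNIV. v$j * partial cubeI j F (c + t *\<^sub>R v)) has_real_derivative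
        (\<Sum>j\<in>UNIV. v$j * (\<Sum>k\<in>UNIV. v$k * partial cubeI k (partial cubeI j F) (c + t *\<^sub>R v)))) (at t within {0..1})"
      by (intro ballI DERIV_sum DERIV_cmult has_real_derivative_along_segment[OF F1 c])
    show "\<forall>t\<in>{0..1}. \<bar>\<Sum>j\<in>UNIV. v$j * (\<Sum>k\<in>UNIV. v$k * partial cubeI k (partial cubeI j F) (c + t *\<^sub>R v))\<bar> \<le> ?S * (?S * K)"
      using segment_mem_cubeI[OF c] by (auto intro!: abs_sum_mult_le K)
  qed auto
  then show ?thesis by (simp add: power2_eq_square mult.assoc)
qed

lemma taylor3_cubeI:
  fixes F :: "real^'n \<Rightarrow> real"
  assumes F: "F differentiable_on cubeI" and F1: "\<And>j. partial cubeI j F differentiable_on cubeI"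
    and F2: "\<And>j k. partial cubeI k (partial cubeI j F) differentiable_on cubeI"
    and K: "\<And>j k l z. z \<in> cubeI \<Longrightarrow> \<bar>partial cubeI l (partial cubeI k (partial cubeI j F)) z\<bar> \<le> K"
    and c: "c \<in> cubeI" "c + v \<in> cubeI"
  shows "\<bar>F (c + v) - F c - (\<Sum>j\<in>UNIV. v$j * partial cubeI j F c)
           - (\<Sum>j\<in>UNIV. v$j * (\<Sum>k\<in>UNIV. v$k * partial cubeI k (partial cubeI j F) c)) / 2\<bar>
         \<le> (\<Sum>j\<in>UNIV. \<bar>v$j\<bar>)^3 * K / 6"
proof -
  let ?S = "\<Sum>j\<in>UNIV. \<bar>v$j\<bar>"
  have "\<bar>F (c + 1 *\<^sub>R v) - F (c + 0 *\<^sub>R v) - (\<Sum>j\<in>UNIV. v$j * partial cubeI j F (c + 0 *\<^sub>R v))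
      - (\<Sum>j\<in>UNIV. v$j * (\<Sum>k\<in>UNIV. v$k * partial cubeI k (partial cubeI j F) (c + 0 *\<^sub>R v))) / 2\<bar>
        \<le> (?S * (?S * (?S * K))) / 6"
  proof (rule taylor3_interval[of "\<lambda>t. F (c + t *\<^sub>R v)"
      "\<lambda>t. \<Sum>j\<in>UNIV. v$j * partial cubeI j F (c + t *\<^sub>R v)"
      "\<lambda>t. \<Sum>j\<in>UNIV. v$j * (\<Sum>k\<in>UNIV. v$k * partial cubeI k (partial cubeI j F) (c + t *\<^sub>R v))"])
    show "\<forall>t\<in>{0..1}. ((\<lambda>t. F (c + t *\<^sub>R v)) has_real_derivative (\<Sum>j\<in>UNIV. v$j * partial cubeI j F (c + t *\<^sub>R v))) (at t within {0..1})"
      using has_real_derivative_along_segment[OF F c] by blast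
    show "\<forall>t\<in>{0..1}. ((\<lambda>t. \<Sum>j\<in>UNIV. v$j * partial cubeI j F (c + t *\<^sub>R v)) has_real_derivative
        (\<Sum>j\<in>UNIV. v$j * (\<Sum>k\<in>UNIV. v$k * partial cubeI k (partial cubeI j F) (c + t *\<^sub>R v)))) (at t within {0..1})"
      by (intro ballI DERIV_sum DERIV_cmult has_real_derivative_along_segment[OF F1 c])
    show "\<forall>t\<in>{0..1}. ((\<lambda>t. \<Sum>j\<in>UNIV. v$j * (\<Sum>k\<in>UNIV. v$k * partial cubeI k (partial cubeI j F) (c + t *\<^sub>R v))) has_real_derivative
        (\<Sum>j\<in>UNIV. v$j * (\<Sum>k\<in>UNIV. v$k * (\<Sum>l\<in>UNIV. v$l * partial cubeI l (partial cubeI k (partial cubeI j F)) (c + t *\<^sub>R v))))) (at t within {0..1})"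
      by (intro ballI DERIV_sum DERIV_cmult has_real_derivative_along_segment[OF F2 c])
    show "\<forall>t\<in>{0..1}. \<bar>\<Sum>j\<in>UNIV. v$j * (\<Sum>k\<in>UNIV. v$k * (\<Sum>l\<in>UNIV. v$l * partial cubeI l (partial cubeI k (partial cubeI j F)) (c + t *\<^sub>R v)))\<bar> \<le> ?S * (?S * (?S * K))"
    proof
      fix t :: real assume "t \<in> {0..1}"
      then have z: "c + t *\<^sub>R v \<in> cubeI" using segment_mem_cubeI[OF c] by auto
      show "\<bar>\<Sum>j\<in>UNIV. v$j * (\<Sum>k\<in>UNIV. v$k * (\<Sum>l\<in>UNIV. v$l * partial cubeI l (partial cubeI k (partial cubeI j F)) (c + t *\<^sub>R v)))\<bar> \<le> ?S * (?S * (?S * K))"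
        by (rule abs_sum_mult_le, rule abs_sum_mult_le, rule abs_sum_mult_le, rule K[OF z])
    qed
  qed
  moreover have "?S ^ 3 * K / 6 = (?S * (?S * (?S * K))) / 6" by (simp add: power3_eq_cube)
  ultimately show ?thesis by (simp only: scaleR_one scaleR_zero_left add_0_right)
qed

section \<open>Deviation from the paraboloid\<close>

lemma matrix_vector_mult_mat: "mat a *v x = a *\<^sub>R (x :: real^'n)"
proof -
  have "(if i = j then a else 0) * x$j = (if i = j then a * x$j else 0)" for i j by simp
  then show ?thesis by (simp add: vec_eq_iff matrix_vector_mult_def mat_def)
qed

lemma quad_poly_mat: "quad_poly 0 0 (mat a) x = a * (norm x)\<^sup>2"
  by (simp add: quad_poly_def matrix_vector_mult_mat power2_norm_eq_inner)

lemma matrix_vector_mult_inner_self: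
  "((M::real^'n^'n) *v x) \<bullet> x = (\<Sum>j\<in>UNIV. x$j * (\<Sum>k\<in>UNIV. x$k * M$k$j))"
proof -
  have "(M *v x) \<bullet> x = (\<Sum>k\<in>UNIV. (\<Sum>j\<in>UNIV. M$k$j * x$j) * x$k)"
    by (simp add: inner_vec_def matrix_vector_mult_def mult.commute)
  also have "\<dots> = (\<Sum>k\<in>UNIV. \<Sum>j\<in>UNIV. M$k$j * x$j * x$k)"
    by (simp only: sum_distrib_right)
  also have "\<dots> = (\<Sum>k\<in>UNIV. \<Sum>j\<in>UNIV. x$j * (x$k * M$k$j))"
    by (simp add: mult_ac)
  also have "\<dots> = (\<Sum>j\<in>UNIV. \<Sum>k\<in>UNIV. x$j * (x$k * M$k$j))" by (rule sum.swap)
  also have "\<dots> = (\<Sum>j\<in>UNIV. x$j * (\<Sum>k\<in>UNIV. x$k * M$k$j))" by (simp add: sum_distrib_left)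
  finally show ?thesis .
qed

lemma hess_symmetric:
  fixes w :: "real^'n \<Rightarrow> real"
  assumes "CN_on cubeI N w" "2 \<le> N" "c \<in> cubeI"
  shows "hess w c $ i $ j = hess w c $ j $ i"
  using pder_list_perm[OF assms(1) _ _ assms(3), of "[i, j]" "[j, i]"] assms(2)
  by (simp add: hess_def)

abbreviation ell_dev :: "(real^'n \<Rightarrow> real) \<Rightarrow> real^'n \<Rightarrow> real" where
  "ell_dev \<psi> \<equiv> \<lambda>x. \<psi> x - (norm x)\<^sup>2 / 2"

lemma CN_on_ell_dev:
  fixes \<psi> :: "real^'n \<Rightarrow> real"
  assumes "CN_on cubeI N \<psi>"
  shows "CN_on cubeI N (ell_dev \<psi>)"
proof -
  have eq: "ell_dev \<psi> = (\<lambda>\<xi>. 1 * \<psi> (1 *\<^sub>R \<xi> + 0) + quad_poly 0 0 (mat (-1/2)) \<xi>)"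
    by (simp add: quad_poly_mat fun_eq_iff)
  show ?thesis unfolding eq by (rule CN_on_rescale_add_quad_poly[OF assms]) simp
qed

lemma pder_list_eq_ell_dev_add:
  fixes \<psi> :: "real^'n \<Rightarrow> real"
  assumes "CN_on cubeI N \<psi>" "length L \<le> N" "x \<in> cubeI"
  shows "pderI L \<psi> x = pderI L (ell_dev \<psi>) x + pderI L (quad_poly 0 0 (mat (1/2))) x"
proof -
  have eq: "\<psi> = (\<lambda>\<xi>. 1 * ell_dev \<psi> (1 *\<^sub>R \<xi> + 0) + quad_poly 0 0 (mat (1/2)) \<xi>)"
    by (simp add: quad_poly_mat fun_eq_iff)
  have "pderI L \<psi> x = pderI L (\<lambda>\<xi>. 1 * ell_dev \<psi> (1 *\<^sub>R \<xi> + 0) + quad_poly 0 0 (mat (1/2)) \<xi>) x"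
    by (subst eq) (rule refl)
  also have "\<dots> = 1 * 1 ^ length L * pderI L (ell_dev \<psi>) (1 *\<^sub>R x + 0) + pderI L (quad_poly 0 0 (mat (1/2))) x"
    by (rule pder_list_rescale_add_quad_poly[OF CN_on_imp_differentiable_upto[OF CN_on_ell_dev[OF assms(1)]
        assms(2)] _ assms(3)]) simp
  finally show ?thesis by simp
qed

lemma grad_eq_grad_ell_dev:
  fixes \<psi> :: "real^'n \<Rightarrow> real"
  assumes "CN_on cubeI N \<psi>" "1 \<le> N" "c \<in> cubeI"
  shows "grad \<psi> c = grad (ell_dev \<psi>) c + c"
proof -
  have "pderI [i] (quad_poly 0 0 (mat (1/2))) c = c $ i" for i
  proof -
    have "(if i = j then 1/2 else 0) + (if j = i then 1/2 else 0) = (if i = j then 1 else (0::real))" for j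
      by auto
    moreover have "(if i = j then 1 else 0) * c$j = (if i = j then c$j else 0)" for j by simp
    ultimately show ?thesis
      using pder_list_quad_poly_1[OF assms(3), of i 0 0 "mat (1/2)"] by (simp add: mat_def)
  qed
  then show ?thesis
    using pder_list_eq_ell_dev_add[OF assms(1) _ assms(3), of "[_]"] assms(2)
    by (simp add: grad_def vec_eq_iff)
qed

lemma hess_eq_hess_ell_dev:
  fixes \<psi> :: "real^'n \<Rightarrow> real"
  assumes "CN_on cubeI N \<psi>" "2 \<le> N" "c \<in> cubeI"
  shows "hess \<psi> c = hess (ell_dev \<psi>) c + mat 1"
proof -
  have "pderI [i, j] (quad_poly 0 0 (mat (1/2))) c = (if i = j then 1 else 0)" for i j
    using pder_list_quad_poly_2[OF assms(3), of i j 0 0 "mat (1/2)"] by (auto simp: mat_def)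
  then show ?thesis
    using pder_list_eq_ell_dev_add[OF assms(1) _ assms(3), of "[_, _]"] assms(2)
    by (simp add: hess_def vec_eq_iff mat_def)
qed

lemma Ell_pder_list_ell_dev_bound:
  fixes \<psi> :: "real^'n \<Rightarrow> real"
  assumes "Ell N \<epsilon> \<psi>" "length L \<le> N" "z \<in> cubeI"
  shows "\<bar>pderI L (ell_dev \<psi>) z\<bar> \<le> \<epsilon>"
proof -
  have "CN_on cubeI N (ell_dev \<psi>)" using assms(1) CN_on_ell_dev unfolding Ell_def by blast
  then have "pderI L (ell_dev \<psi>) z = pder cubeI (\<lambda>i. count_list L i) (ell_dev \<psi>) z"
    using assms(2,3) by (rule pder_list_eq_pder)
  then show ?thesis using assms mi_order_count_list[of L] unfolding Ell_def by auto
qed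

definition rescaled :: "(real^'n \<Rightarrow> real) \<Rightarrow> real \<Rightarrow> real^'n \<Rightarrow> real^'n^'n \<Rightarrow> real^'n \<Rightarrow> real" where
  "rescaled w \<rho> c M =
     (\<lambda>\<xi>. (1/\<rho>\<^sup>2) * w (\<rho> *\<^sub>R \<xi> + c) + quad_poly (- w c / \<rho>\<^sup>2) (- (1/\<rho>) *\<^sub>R grad w c) M \<xi>)"

lemma rescaled_apply:
  assumes "\<rho> \<noteq> 0"
  shows "rescaled w \<rho> c M \<xi> = (w (c + \<rho> *\<^sub>R \<xi>) - w c - \<rho> * (grad w c \<bullet> \<xi>)) / \<rho>\<^sup>2 + (M *v \<xi>) \<bullet> \<xi>"
  using assms by (simp add: rescaled_def quad_poly_def add.commute field_simps power2_eq_square)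

lemma list_cases_length3:
  obtains "L = []" | i where "L = [i]" | i j where "L = [i, j]" | "3 \<le> length L"
  by (cases L; cases "tl L"; cases "tl (tl L)") auto

locale rescaling =
  fixes w :: "real^'n \<Rightarrow> real" and N :: nat and \<epsilon> \<rho> :: real and c :: "real^'n"
  assumes CN_on_w: "CN_on cubeI N w"
    and pder_list_w_bound: "\<And>L z. length L \<le> N \<Longrightarrow> z \<in> cubeI \<Longrightarrow> \<bar>pderI L w z\<bar> \<le> \<epsilon>"
    and rho_pos: "0 < \<rho>" and rho_le_half: "\<rho> \<le> 1/2" and center: "c \<in> half_cubeI"
begin

lemma rescale_maps_cubeI: "\<forall>\<xi>\<in>cubeI. \<rho> *\<^sub>R \<xi> + c \<in> cubeI"
  using scaleR_add_mem_cubeI rho_pos rho_le_half center by blast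

lemma shift_mem_cubeI: "\<xi> \<in> cubeI \<Longrightarrow> c + \<rho> *\<^sub>R \<xi> \<in> cubeI"
  using rescale_maps_cubeI by (simp add: add.commute)

lemma center_mem_cubeI: "c \<in> cubeI"
  using center half_cubeI_subset_cubeI by blast

lemma eps_nonneg: "0 \<le> \<epsilon>"
  using pder_list_w_bound[of "[]" c] center_mem_cubeI by auto

lemma taylor_remainder_rescale:
  fixes \<xi> :: "real^'n"
  assumes "\<xi> \<in> cubeI" "\<bar>X\<bar> \<le> (\<Sum>j\<in>UNIV. \<bar>(\<rho> *\<^sub>R \<xi>)$j\<bar>) ^ m * \<epsilon> / d" "0 < d"
  shows "\<bar>X / \<rho> ^ k\<bar> \<le> \<rho> ^ m / \<rho> ^ k * (real CARD('n) ^ m * \<epsilon> / d)"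
proof -
  have "(\<Sum>j\<in>UNIV. \<bar>(\<rho> *\<^sub>R \<xi>)$j\<bar>) ^ m \<le> (\<rho> * real CARD('n)) ^ m"
    using sum_abs_scaleR_le_card[OF assms(1)] rho_pos by (intro power_mono) (auto intro: sum_nonneg)
  then have "\<bar>X\<bar> \<le> (\<rho> * real CARD('n)) ^ m * \<epsilon> / d"
    using assms(2,3) eps_nonneg by (meson divide_right_mono mult_right_mono order_trans less_imp_le)
  then show ?thesis
    using rho_pos by (simp add: abs_divide divide_right_mono power_mult_distrib field_simps)
qed

lemma CN_on_rescaled: "CN_on cubeI N (rescaled w \<rho> c M)"
  unfolding rescaled_def by (rule CN_on_rescale_add_quad_poly[OF CN_on_w rescale_maps_cubeI])

lemma pder_list_rescaled:
  assumes "length L \<le> N" "\<xi> \<in> cubeI"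
  shows "pderI L (rescaled w \<rho> c M) \<xi> = \<rho> ^ length L / \<rho>\<^sup>2 * pderI L w (c + \<rho> *\<^sub>R \<xi>)
           + pderI L (quad_poly (- w c / \<rho>\<^sup>2) (- (1/\<rho>) *\<^sub>R grad w c) M) \<xi>"
  unfolding rescaled_def
  by (subst pder_list_rescale_add_quad_poly[OF CN_on_imp_differentiable_upto[OF CN_on_w assms(1)]
        rescale_maps_cubeI assms(2)]) (simp add: add.commute)

lemma pder_list_rescaled_high_order:
  assumes "3 \<le> length L" "length L \<le> N" "\<xi> \<in> cubeI"
  shows "\<bar>pderI L (rescaled w \<rho> c M) \<xi>\<bar> \<le> \<rho> ^ (length L - 2) * \<epsilon>"
proof -
  have "\<rho> ^ length L / \<rho>\<^sup>2 = \<rho> ^ (length L - 2)" using rho_pos assms(1) by (simp add: power_diff)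
  then have "pderI L (rescaled w \<rho> c M) \<xi> = \<rho> ^ (length L - 2) * pderI L w (c + \<rho> *\<^sub>R \<xi>)"
    using pder_list_rescaled[OF assms(2,3)] pder_list_quad_poly_vanish[OF assms(3,1)] by simp
  then show ?thesis
    using pder_list_w_bound[OF assms(2) shift_mem_cubeI[OF assms(3)]] rho_pos
    by (simp add: abs_mult mult_left_mono)
qed

lemma grad_inner_scaleR: "(\<Sum>j\<in>UNIV. (\<rho> *\<^sub>R \<xi>)$j * partial cubeI j w c) = \<rho> * (grad w c \<bullet> \<xi>)"
  by (simp add: inner_vec_def grad_def sum_distrib_left mult_ac)

lemma rescaled_zero_bound:
  assumes N: "2 \<le> N" and \<xi>: "\<xi> \<in> cubeI"
  shows "\<bar>rescaled w \<rho> c 0 \<xi>\<bar> \<le> real CARD('n) ^ 2 / 2 * \<epsilon>"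
proof -
  let ?v = "\<rho> *\<^sub>R \<xi>"
  have "\<bar>w (c + ?v) - w c - (\<Sum>j\<in>UNIV. ?v$j * partial cubeI j w c)\<bar> \<le> (\<Sum>j\<in>UNIV. \<bar>?v$j\<bar>)^2 * \<epsilon> / 2"
  proof (rule taylor2_cubeI[OF _ _ _ center_mem_cubeI shift_mem_cubeI[OF \<xi>]])
    show "w differentiable_on cubeI" "partial cubeI j w differentiable_on cubeI" for j
      using CN_on_pder_list_differentiable_on[OF CN_on_w, of "[]"] CN_on_pder_list_differentiable_on[OF CN_on_w, of "[j]"] N by simp_all
    show "\<bar>partial cubeI k (partial cubeI j w) z\<bar> \<le> \<epsilon>" if "z \<in> cubeI" for j k z
      using pder_list_w_bound[of "[k, j]" z] N that by simp
  qed
  from taylor_remainder_rescale[OF \<xi> this[unfolded grad_inner_scaleR], of 2]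
  show ?thesis using rho_pos by (simp add: rescaled_apply grad_inner_scaleR)
qed

lemma partial_rescaled_zero_bound:
  assumes N: "2 \<le> N" and \<xi>: "\<xi> \<in> cubeI"
  shows "\<bar>pderI [i] (rescaled w \<rho> c 0) \<xi>\<bar> \<le> real CARD('n) * \<epsilon>"
proof -
  let ?v = "\<rho> *\<^sub>R \<xi>" and ?G = "partial cubeI i w"
  have "\<bar>?G (c + ?v) - ?G c\<bar> \<le> (\<Sum>j\<in>UNIV. \<bar>?v$j\<bar>) ^ 1 * \<epsilon> / 1"
    using taylor1_cubeI[OF _ _ center_mem_cubeI shift_mem_cubeI[OF \<xi>], of ?G \<epsilon>]
      CN_on_pder_list_differentiable_on[OF CN_on_w, of "[i]"] pder_list_w_bound[of "[_, i]"] N by simp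
  from taylor_remainder_rescale[OF \<xi> this, of 1]
  show ?thesis
    using pder_list_rescaled[of "[i]" \<xi> 0] pder_list_quad_poly_1[OF \<xi>, of i _ _ 0] N \<xi> rho_pos
    by (simp add: grad_def power2_eq_square diff_divide_distrib)
qed

lemma pder2_rescaled_zero_bound:
  assumes N: "2 \<le> N" and \<xi>: "\<xi> \<in> cubeI"
  shows "\<bar>pderI [i, j] (rescaled w \<rho> c 0) \<xi>\<bar> \<le> \<epsilon>"
  using pder_list_rescaled[of "[i, j]" \<xi> 0] pder_list_quad_poly_2[OF \<xi>, of i j _ _ 0]
    pder_list_w_bound[of "[i, j]", OF _ shift_mem_cubeI[OF \<xi>]] N \<xi> rho_pos
  by (simp add: power2_eq_square)

lemma pder_list_rescaled_zero_bound:
  assumes N: "2 \<le> N" and L: "length L \<le> N" and \<xi>: "\<xi> \<in> cubeI"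
  shows "\<bar>pderI L (rescaled w \<rho> c 0) \<xi>\<bar> \<le> (real CARD('n) ^ 2 + real CARD('n) + 1) * \<epsilon>"
proof -
  have le: "a * \<epsilon> \<le> (real CARD('n) ^ 2 + real CARD('n) + 1) * \<epsilon>"
    if "a \<le> real CARD('n) ^ 2 + real CARD('n) + 1" for a
    using that eps_nonneg by (rule mult_right_mono)
  show ?thesis
  proof (cases L rule: list_cases_length3)
    case 1
    then show ?thesis using rescaled_zero_bound[OF N \<xi>] le[of "real CARD('n) ^ 2 / 2"] by simp
  next
    case (2 i)
    then show ?thesis using partial_rescaled_zero_bound[OF N \<xi>, of i] le[of "real CARD('n)"] by simp
  next
    case (3 i j)
    then show ?thesis using pder2_rescaled_zero_bound[OF N \<xi>, of i j] le[of 1] by simp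
  next
    case 4
    have "\<rho> ^ (length L - 2) \<le> 1" using rho_pos rho_le_half by (simp add: power_le_one)
    then have "\<rho> ^ (length L - 2) \<le> real CARD('n) ^ 2 + real CARD('n) + 1"
      by (smt (verit) of_nat_0_le_iff zero_le_power2)
    then show ?thesis using pder_list_rescaled_high_order[OF 4 L \<xi>, of 0] le[of "\<rho> ^ (length L - 2)"]
      by simp
  qed
qed

lemma hess_w_symmetric: "3 \<le> N \<Longrightarrow> hess w c $ i $ j = hess w c $ j $ i"
  using hess_symmetric[OF CN_on_w _ center_mem_cubeI] by simp

lemma rescaled_hess_bound:
  assumes N: "3 \<le> N" and \<xi>: "\<xi> \<in> cubeI"
  shows "\<bar>rescaled w \<rho> c (- (1/2) *\<^sub>R hess w c) \<xi>\<bar> \<le> real CARD('n) ^ 3 / 6 * \<rho> * \<epsilon>"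
proof -
  let ?v = "\<rho> *\<^sub>R \<xi>"
  have "\<bar>w (c + ?v) - w c - (\<Sum>j\<in>UNIV. ?v$j * partial cubeI j w c)
      - (\<Sum>j\<in>UNIV. ?v$j * (\<Sum>k\<in>UNIV. ?v$k * partial cubeI k (partial cubeI j w) c)) / 2\<bar>
      \<le> (\<Sum>j\<in>UNIV. \<bar>?v$j\<bar>) ^ 3 * \<epsilon> / 6"
  proof (rule taylor3_cubeI[OF _ _ _ _ center_mem_cubeI shift_mem_cubeI[OF \<xi>]])
    show "w differentiable_on cubeI" "partial cubeI j w differentiable_on cubeI"
      "partial cubeI k (partial cubeI j w) differentiable_on cubeI" for j k
      using CN_on_pder_list_differentiable_on[OF CN_on_w, of "[]"] CN_on_pder_list_differentiable_on[OF CN_on_w, of "[j]"]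
        CN_on_pder_list_differentiable_on[OF CN_on_w, of "[k, j]"] N by simp_all
    show "\<bar>partial cubeI l (partial cubeI k (partial cubeI j w)) z\<bar> \<le> \<epsilon>" if "z \<in> cubeI" for j k l z
      using pder_list_w_bound[of "[l, k, j]" z] N that by simp
  qed
  moreover have "(\<Sum>j\<in>UNIV. ?v$j * (\<Sum>k\<in>UNIV. ?v$k * partial cubeI k (partial cubeI j w) c))
      = \<rho>\<^sup>2 * ((hess w c *v \<xi>) \<bullet> \<xi>)"
    by (simp add: matrix_vector_mult_inner_self hess_def sum_distrib_left power2_eq_square mult_ac)
  ultimately have "\<bar>w (c + ?v) - w c - \<rho> * (grad w c \<bullet> \<xi>) - \<rho>\<^sup>2 * ((hess w c *v \<xi>) \<bullet> \<xi>) / 2\<bar>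
      \<le> (\<Sum>j\<in>UNIV. \<bar>?v$j\<bar>) ^ 3 * \<epsilon> / 6"
    by (simp only: grad_inner_scaleR)
  from taylor_remainder_rescale[OF \<xi> this, of 2]
  have "\<bar>(w (c + ?v) - w c - \<rho> * (grad w c \<bullet> \<xi>) - \<rho>\<^sup>2 * ((hess w c *v \<xi>) \<bullet> \<xi>) / 2) / \<rho>\<^sup>2\<bar>
      \<le> real CARD('n) ^ 3 / 6 * \<rho> * \<epsilon>"
    using rho_pos by (simp add: power2_eq_square power3_eq_cube mult_ac)
  moreover have "rescaled w \<rho> c (- (1/2) *\<^sub>R hess w c) \<xi>
      = (w (c + ?v) - w c - \<rho> * (grad w c \<bullet> \<xi>) - \<rho>\<^sup>2 * ((hess w c *v \<xi>) \<bullet> \<xi>) / 2) / \<rho>\<^sup>2"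
    using rho_pos
    by (simp add: rescaled_apply flip: scaleR_minus_left scaleR_matrix_vector_assoc)
      (simp add: field_simps power2_eq_square)
  ultimately show ?thesis by simp
qed

lemma partial_rescaled_hess_bound:
  assumes N: "3 \<le> N" and \<xi>: "\<xi> \<in> cubeI"
  shows "\<bar>pderI [i] (rescaled w \<rho> c (- (1/2) *\<^sub>R hess w c)) \<xi>\<bar> \<le> real CARD('n) ^ 2 / 2 * \<rho> * \<epsilon>"
proof -
  let ?v = "\<rho> *\<^sub>R \<xi>" and ?G = "partial cubeI i w"
  have "\<bar>?G (c + ?v) - ?G c - (\<Sum>j\<in>UNIV. ?v$j * partial cubeI j ?G c)\<bar> \<le> (\<Sum>j\<in>UNIV. \<bar>?v$j\<bar>) ^ 2 * \<epsilon> / 2"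
  proof (rule taylor2_cubeI[OF _ _ _ center_mem_cubeI shift_mem_cubeI[OF \<xi>]])
    show "?G differentiable_on cubeI" "partial cubeI j ?G differentiable_on cubeI" for j
      using CN_on_pder_list_differentiable_on[OF CN_on_w, of "[i]"] CN_on_pder_list_differentiable_on[OF CN_on_w, of "[j, i]"] N by simp_all
    show "\<bar>partial cubeI k (partial cubeI j ?G) z\<bar> \<le> \<epsilon>" if "z \<in> cubeI" for j k z
      using pder_list_w_bound[of "[k, j, i]" z] N that by simp
  qed
  from taylor_remainder_rescale[OF \<xi> this, of 1]
  have "\<bar>(?G (c + ?v) - ?G c - (\<Sum>j\<in>UNIV. ?v$j * partial cubeI j ?G c)) / \<rho>\<bar>
      \<le> \<rho> * (real CARD('n) ^ 2 * \<epsilon> / 2)"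
    using rho_pos by (simp add: power2_eq_square)
  moreover have "(- (1/2) *\<^sub>R hess w c) $ i $ j + (- (1/2) *\<^sub>R hess w c) $ j $ i = - partial cubeI j ?G c" for j
    using hess_w_symmetric[OF N, of i j] by (simp add: hess_def)
  then have "pderI [i] (quad_poly (- w c / \<rho>\<^sup>2) (- (1/\<rho>) *\<^sub>R grad w c) (- (1/2) *\<^sub>R hess w c)) \<xi>
      = - ?G c / \<rho> - (\<Sum>j\<in>UNIV. ?v$j * partial cubeI j ?G c) / \<rho>"
    unfolding pder_list_quad_poly_1[OF \<xi>] using rho_pos
    by (simp add: grad_def sum_divide_distrib sum_negf mult_ac)
  then have "pderI [i] (rescaled w \<rho> c (- (1/2) *\<^sub>R hess w c)) \<xi>
      = (?G (c + ?v) - ?G c - (\<Sum>j\<in>UNIV. ?v$j * partial cubeI j ?G c)) / \<rho>"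
    using pder_list_rescaled[of "[i]" \<xi>] N \<xi> rho_pos by (simp add: power2_eq_square diff_divide_distrib)
  ultimately show ?thesis by (simp add: mult_ac)
qed

lemma pder2_rescaled_hess_bound:
  assumes N: "3 \<le> N" and \<xi>: "\<xi> \<in> cubeI"
  shows "\<bar>pderI [i, j] (rescaled w \<rho> c (- (1/2) *\<^sub>R hess w c)) \<xi>\<bar> \<le> real CARD('n) * \<rho> * \<epsilon>"
proof -
  let ?v = "\<rho> *\<^sub>R \<xi>" and ?F = "pderI [i, j] w"
  have "\<bar>?F (c + ?v) - ?F c\<bar> \<le> (\<Sum>j\<in>UNIV. \<bar>?v$j\<bar>) ^ 1 * \<epsilon> / 1"
    using taylor1_cubeI[OF _ _ center_mem_cubeI shift_mem_cubeI[OF \<xi>], of ?F \<epsilon>]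
      CN_on_pder_list_differentiable_on[OF CN_on_w, of "[i, j]"] pder_list_w_bound[of "[_, i, j]"] N by simp
  from taylor_remainder_rescale[OF \<xi> this, of 0]
  have "\<bar>?F (c + ?v) - ?F c\<bar> \<le> real CARD('n) * \<rho> * \<epsilon>" by (simp add: mult_ac)
  moreover have "pderI [i, j] (rescaled w \<rho> c (- (1/2) *\<^sub>R hess w c)) \<xi> = ?F (c + ?v) - ?F c"
    using pder_list_rescaled[of "[i, j]" \<xi>] pder_list_quad_poly_2[OF \<xi>, of i j]
      hess_w_symmetric[OF N, of i j] N \<xi> rho_pos
    by (simp add: hess_def power2_eq_square)
  ultimately show ?thesis by simp
qed

lemma pder_list_rescaled_hess_bound:
  assumes N: "3 \<le> N" and L: "length L \<le> N" and \<xi>: "\<xi> \<in> cubeI"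
  shows "\<bar>pderI L (rescaled w \<rho> c (- (1/2) *\<^sub>R hess w c)) \<xi>\<bar>
    \<le> (if length L \<le> 2 then real CARD('n) ^ (3 - length L) / fact (3 - length L) * \<rho> * \<epsilon>
        else \<rho> ^ (length L - 2) * \<epsilon>)"
proof (cases L rule: list_cases_length3)
  case 1
  have "fact 3 = (6::real)" by (simp add: eval_nat_numeral)
  then show ?thesis using rescaled_hess_bound[OF N \<xi>] 1 by simp
next
  case (2 i)
  then show ?thesis using partial_rescaled_hess_bound[OF N \<xi>, of i] by (simp add: numeral_2_eq_2)
next
  case (3 i j)
  then show ?thesis using pder2_rescaled_hess_bound[OF N \<xi>, of i j] by simp
next
  case 4
  then show ?thesis using pder_list_rescaled_high_order[OF 4 L \<xi>] by simp
qed

end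

lemma rescaling_ell_dev:
  fixes \<psi> :: "real^'n \<Rightarrow> real"
  assumes "Ell N \<epsilon> \<psi>" "0 < \<rho>" "\<rho> \<le> 1/2" "c \<in> half_cubeI"
  shows "rescaling (ell_dev \<psi>) N \<epsilon> \<rho> c"
proof (rule rescaling.intro)
  show "CN_on cubeI N (ell_dev \<psi>)" using assms(1) CN_on_ell_dev unfolding Ell_def by blast
qed (use assms Ell_pder_list_ell_dev_bound in auto)

lemma psi_cr_eq_rescaled:
  fixes \<psi> :: "real^'n \<Rightarrow> real"
  assumes "CN_on cubeI N \<psi>" "1 \<le> N" "0 < \<rho>" "c \<in> cubeI"
  shows "psi_cr \<psi> c \<rho> = rescaled (ell_dev \<psi>) \<rho> c (mat (1/2))"
proof
  fix \<xi> :: "real^'n"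
  have "(c + \<rho> *\<^sub>R \<xi>) \<bullet> (c + \<rho> *\<^sub>R \<xi>) = \<rho>\<^sup>2 * (\<xi> \<bullet> \<xi>) + 2 * \<rho> * (c \<bullet> \<xi>) + c \<bullet> c"
    by (simp add: inner_add_left inner_add_right inner_commute power2_eq_square algebra_simps)
  then show "psi_cr \<psi> c \<rho> \<xi> = rescaled (ell_dev \<psi>) \<rho> c (mat (1/2)) \<xi>"
    using assms(3) unfolding psi_cr_def rescaled_apply[OF less_imp_neq[OF assms(3), symmetric]]
      grad_eq_grad_ell_dev[OF assms(1,2,4)] power2_norm_eq_inner
    by (simp add: matrix_vector_mult_mat inner_add_left field_simps power2_eq_square add.commute)
qed

lemma ell_dev_psi_cr_eq_rescaled:
  fixes \<psi> :: "real^'n \<Rightarrow> real"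
  assumes "CN_on cubeI N \<psi>" "1 \<le> N" "0 < \<rho>" "c \<in> cubeI"
  shows "ell_dev (psi_cr \<psi> c \<rho>) = rescaled (ell_dev \<psi>) \<rho> c 0"
  using assms(3) unfolding psi_cr_eq_rescaled[OF assms]
  by (simp add: fun_eq_iff rescaled_apply matrix_vector_mult_mat power2_norm_eq_inner)

lemma psi_cr_sub_hess_eq_rescaled:
  fixes \<psi> :: "real^'n \<Rightarrow> real"
  assumes "CN_on cubeI N \<psi>" "2 \<le> N" "0 < \<rho>" "c \<in> cubeI"
  shows "(\<lambda>x. psi_cr \<psi> c \<rho> x - (hess \<psi> c *v x) \<bullet> x / 2)
    = rescaled (ell_dev \<psi>) \<rho> c (- (1/2) *\<^sub>R hess (ell_dev \<psi>) c)"
proof -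
  have N1: "1 \<le> N" using assms(2) by simp
  show ?thesis
    using assms(3) unfolding psi_cr_eq_rescaled[OF assms(1) N1 assms(3,4)] hess_eq_hess_ell_dev[OF assms(1,2,4)]
    by (simp add: fun_eq_iff rescaled_apply matrix_vector_mult_add_rdistrib matrix_vector_mult_mat inner_add_left
        flip: scaleR_minus_left scaleR_matrix_vector_assoc) (simp add: field_simps)
qed

lemma pder_psi_cr_sub_hess_bound:
  fixes \<psi> :: "real^'n \<Rightarrow> real"
  assumes E: "Ell N \<epsilon> \<psi>" and N: "3 \<le> N" and \<rho>: "0 < \<rho>" "\<rho> \<le> 1/2" and c: "c \<in> half_cubeI"
    and \<alpha>: "mi_order \<alpha> \<le> N" and \<xi>: "\<xi> \<in> cubeI"
  shows "\<bar>pder cubeI \<alpha> (\<lambda>x. psi_cr \<psi> c \<rho> x - (hess \<psi> c *v x) \<bullet> x / 2) \<xi>\<bar>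
    \<le> (if mi_order \<alpha> \<le> 2 then real CARD('n) ^ (3 - mi_order \<alpha>) / fact (3 - mi_order \<alpha>) * \<rho> * \<epsilon>
        else \<rho> ^ (mi_order \<alpha> - 2) * \<epsilon>)"
proof -
  interpret rescaling "ell_dev \<psi>" N \<epsilon> \<rho> c by (rule rescaling_ell_dev[OF E \<rho> c])
  have eq: "(\<lambda>x. psi_cr \<psi> c \<rho> x - (hess \<psi> c *v x) \<bullet> x / 2)
      = rescaled (ell_dev \<psi>) \<rho> c (- (1/2) *\<^sub>R hess (ell_dev \<psi>) c)"
    using E N \<rho> center_mem_cubeI by (intro psi_cr_sub_hess_eq_rescaled) (auto simp: Ell_def)
  have "length (mi_list \<alpha>) \<le> N" using \<alpha> by (simp add: length_mi_list)
  from pder_list_rescaled_hess_bound[OF N this \<xi>]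
  show ?thesis unfolding pder_def eq length_mi_list .
qed

lemma Ell_psi_cr:
  fixes \<psi> :: "real^'n \<Rightarrow> real"
  assumes E: "Ell N \<epsilon> \<psi>" and N: "2 \<le> N" and \<rho>: "0 < \<rho>" "\<rho> \<le> 1/2" and c: "c \<in> half_cubeI"
  shows "Ell N ((real CARD('n) ^ 2 + real CARD('n) + 1) * \<epsilon>) (psi_cr \<psi> c \<rho>)"
proof -
  interpret rescaling "ell_dev \<psi>" N \<epsilon> \<rho> c by (rule rescaling_ell_dev[OF E \<rho> c])
  have CN: "CN_on cubeI N \<psi>" and N1: "1 \<le> N" using E N by (auto simp: Ell_def)
  note eq = psi_cr_eq_rescaled[OF CN N1 \<rho>(1) center_mem_cubeI]
  have "partial cubeI i (psi_cr \<psi> c \<rho>) 0 = 0" for i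
    using pder_list_rescaled[of "[i]" 0 "mat (1/2)"] pder_list_quad_poly_1[of 0 i] N \<rho>(1)
    by (simp add: eq grad_def power2_eq_square cubeI_iff)
  then have "grad (psi_cr \<psi> c \<rho>) 0 = 0" by (simp add: grad_def vec_eq_iff)
  moreover have "\<bar>pder cubeI \<alpha> (ell_dev (psi_cr \<psi> c \<rho>)) \<xi>\<bar>
      \<le> (real CARD('n) ^ 2 + real CARD('n) + 1) * \<epsilon>" if "mi_order \<alpha> \<le> N" "\<xi> \<in> cubeI" for \<alpha> \<xi>
  proof -
    have "length (mi_list \<alpha>) \<le> N" using that(1) by (simp add: length_mi_list)
    from pder_list_rescaled_zero_bound[OF N this that(2)]
    show ?thesis unfolding pder_def ell_dev_psi_cr_eq_rescaled[OF CN N1 \<rho>(1) center_mem_cubeI] .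
  qed
  moreover have "CN_on cubeI N (psi_cr \<psi> c \<rho>)" unfolding eq by (rule CN_on_rescaled)
  moreover have "psi_cr \<psi> c \<rho> 0 = 0" by (simp add: psi_cr_def)
  ultimately show ?thesis unfolding Ell_def by blast
qed

theorem lemma2p4:
  fixes dummy :: "'n::finite itself"
  shows
  "(\<forall>N (\<epsilon>::real) (\<rho>::real) (\<psi>::real^'n \<Rightarrow> real).
      3 \<le> N \<longrightarrow> 0 < \<epsilon> \<longrightarrow> 0 < \<rho> \<longrightarrow> \<rho> \<le> 1/2 \<longrightarrow> Ell N \<epsilon> \<psi> \<longrightarrow>
      (\<forall>\<alpha>. mi_order \<alpha> \<le> N \<longrightarrow>
        (\<forall>\<xi>\<in>cubeI. \<forall>c\<in>half_cubeI.
           \<bar>pder cubeI \<alpha> (\<lambda>x. psi_cr \<psi> c \<rho> x - (hess \<psi> c *v x) \<bullet> x / 2) \<xi>\<bar>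
             \<le> (if mi_order \<alpha> \<le> 2
                 then real CARD('n) ^ (3 - mi_order \<alpha>) / fact (3 - mi_order \<alpha>) * \<rho> * \<epsilon>
                 else \<rho> ^ (mi_order \<alpha> - 2) * \<epsilon>))))
   \<and>
   (\<exists>C>0. \<forall>N (\<epsilon>::real) (\<rho>::real) (\<psi>::real^'n \<Rightarrow> real) c.
      2 \<le> N \<longrightarrow> 0 < \<epsilon> \<longrightarrow> 0 < \<rho> \<longrightarrow> \<rho> \<le> 1/2 \<longrightarrow> c \<in> half_cubeI \<longrightarrow>
      Ell N \<epsilon> \<psi> \<longrightarrow> Ell N (C * \<epsilon>) (psi_cr \<psi> c \<rho>))"
proof (intro conjI allI impI ballI)
  fix N :: nat and \<epsilon> \<rho> :: real and \<psi> :: "real^'n \<Rightarrow> real" and \<alpha> :: "'n \<Rightarrow> nat" and \<xi> c :: "real^'n"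
  assume "3 \<le> N" "0 < \<rho>" "\<rho> \<le> 1/2" "Ell N \<epsilon> \<psi>" "mi_order \<alpha> \<le> N" "\<xi> \<in> cubeI" "c \<in> half_cubeI"
  then show "\<bar>pder cubeI \<alpha> (\<lambda>x. psi_cr \<psi> c \<rho> x - (hess \<psi> c *v x) \<bullet> x / 2) \<xi>\<bar>
      \<le> (if mi_order \<alpha> \<le> 2 then real CARD('n) ^ (3 - mi_order \<alpha>) / fact (3 - mi_order \<alpha>) * \<rho> * \<epsilon>
          else \<rho> ^ (mi_order \<alpha> - 2) * \<epsilon>)"
    by (intro pder_psi_cr_sub_hess_bound)
next
  show "\<exists>C>0. \<forall>N (\<epsilon>::real) (\<rho>::real) (\<psi>::real^'n \<Rightarrow> real) c.
      2 \<le> N \<longrightarrow> 0 < \<epsilon> \<longrightarrow> 0 < \<rho> \<longrightarrow> \<rho> \<le> 1/2 \<longrightarrow> c \<in> half_cubeI \<longrightarrow>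
      Ell N \<epsilon> \<psi> \<longrightarrow> Ell N (C * \<epsilon>) (psi_cr \<psi> c \<rho>)"
    by (intro exI[of _ "real CARD('n) ^ 2 + real CARD('n) + 1"] conjI allI impI Ell_psi_cr)
      (simp_all add: add_pos_nonneg)
qed

end
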